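(* Suppose Assumptions (NC) and (B) hold. Let $\mathbb H\subseteq L_2(W,A,X)$ and a class $\mathbb Q$ with $\pi\mathbb Q\subseteq L_2(Z,A,X)$ satisfy realizability: $\mathbb H_0^{\mathrm{obs}}\cap\mathbb H\ne\emptyset$ and $\mathbb Q_0^{\mathrm{obs}}\cap\mathbb Q\ne\emptyset$. Let $\mathbb Q'\subseteq L_2(Z,A,X)$ and $\mathbb H'\subseteq L_2(W,A,X)$ satisfy closedness: $P_z(\mathbb H-\mathbb H_0^{\mathrm{obs}})\subseteq\mathbb Q'$ and $\pi P_w(\mathbb Q-\mathbb Q_0^{\mathrm{obs}})\subseteq\mathbb H'$. Then $$\mathbb H_0^{\mathrm{obs}}\cap\mathbb H=\operatorname*{argmin}_{h\in\mathbb H}\sup_{q\in\mathbb Q'}\big(\mathbb E[q(Z,A,X)(h(W,A,X)-Y)]\big)^2,$$ $$\mathbb Q_0^{\mathrm{obs}}\cap\mathbb Q=\operatorname*{argmin}_{q\in\mathbb Q}\sup_{h\in\mathbb H'}\big(\mathbb E[\pi(A\mid X)q(Z,A,X)h(W,A,X)-(\mathcal T h)(W,X)]\big)^2.$$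
   Context: Setup: random variables $(U,X,A,Z,W,Y)$ with $X$ observed covariates, $A\in\mathcal A$ an action ($\mathcal A$ carries a base measure $\mu$), $Z$ a negative control action, $W$ a negative control outcome, $Y$ real outcome, $U$ an unobserved confounder. Potential outcomes $Y(a),Y(a,z),W(a,z)$. $\pi(a\mid x)$ is a given real contrast function. $f(a\mid u,x)$, $f(a\mid w,x)$ are the conditional densities w.r.t. $\mu$ of $A$ given $(U,X)$ and given $(W,X)$. Assumption (NC): (i) $Y=Y(A,Z)$, $W=W(A,Z)$; (ii) $Y(a,z)=Y(a)$; (iii) $W(a,z)=W$; (iv) $(Z,A)\perp(Y(a),W)\mid(U,X)$ for all $a$; (v) $|\pi(a\mid x)/f(a\mid x,u)|<\infty$ for all $a,x,u$. Bridge sets: $\mathbb H_0=\{h\in L_2(W,A,X):\mathbb E[Y-h\mid A,U,X]=0\}$, $\mathbb Q_0=\{q:\pi q\in L_2(Z,A,X),\ \mathbb E[\pi(A\mid X)(q(Z,A,X)-1/f(A\mid U,X))\mid A,U,X]=0\}$ with $(\pi q)(z,a,x)=\pi(a\mid x)q(z,a,x)$; observed bridge sets $\mathbb H_0^{\mathrm{obs}}=\{h\in L_2(W,A,X):\mathbb E[Y-h(W,A,X)\mid Z,A,X]=0\}$, $\mathbb Q_0^{\mathrm{obs}}=\{q:\pi q\in L_2(Z,A,X),\ \mathbb E[\pi(A\mid X)(q(Z,A,X)-1/f(A\mid W,X))\mid W,A,X]=0\}$. Assumption (B): $\mathbb H_0\ne\emptyset$, $\mathbb Q_0\ne\emptyset$.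 $(\mathcal T h)(w,x)=\int h(w,a,x)\pi(a\mid x)d\mu(a)$. Operators $P_z:L_2(W,A,X)\to L_2(Z,A,X)$, $P_z h=\mathbb E[h(W,A,X)\mid Z,A,X]$, and $P_w:L_2(Z,A,X)\to L_2(W,A,X)$, $P_w q=\mathbb E[q(Z,A,X)\mid W,A,X]$. Notation: $P_z(\mathbb H-\mathbb H_0^{\mathrm{obs}})=\{P_z(h-h_0):h\in\mathbb H,h_0\in\mathbb H_0^{\mathrm{obs}}\}$ and $\pi P_w(\mathbb Q-\mathbb Q_0^{\mathrm{obs}})=\{P_w(\pi q-\pi q_0):q\in\mathbb Q,q_0\in\mathbb Q_0^{\mathrm{obs}}\}$. *)

theory Defs
  imports "HOL-Probability.Probability"
begin

definition sigma_gen :: "'o measure \<Rightarrow> ('o \<Rightarrow> 'v) \<Rightarrow> 'v measure \<Rightarrow> 'o measure" where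
  "sigma_gen M V N = vimage_algebra (space M) V N"

definition L2rv :: "'o measure \<Rightarrow> ('o \<Rightarrow> 'v) \<Rightarrow> 'v measure \<Rightarrow> ('v \<Rightarrow> real) \<Rightarrow> bool" where
  "L2rv M V N g \<longleftrightarrow> g \<in> borel_measurable N \<and> integrable M (\<lambda>\<omega>. (g (V \<omega>))\<^sup>2)"

definition cexp_zero :: "'o measure \<Rightarrow> ('o \<Rightarrow> 'v) \<Rightarrow> 'v measure \<Rightarrow> ('o \<Rightarrow> real) \<Rightarrow> bool" where
  "cexp_zero M V N xi \<longleftrightarrow> integrable M xi \<and>
     (AE \<omega> in M. real_cond_exp M (sigma_gen M V N) xi \<omega> = 0)"

definition cexp_version :: "'o measure \<Rightarrow> ('o \<Rightarrow> 'v) \<Rightarrow> 'v measure \<Rightarrow> ('o \<Rightarrow> real) \<Rightarrow> ('v \<Rightarrow> real) \<Rightarrow> bool" where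
  "cexp_version M V N xi g \<longleftrightarrow> g \<in> borel_measurable N \<and>
     (AE \<omega> in M. g (V \<omega>) = real_cond_exp M (sigma_gen M V N) xi \<omega>)"

definition cond_indep :: "'o measure \<Rightarrow> ('o \<Rightarrow> 's) \<Rightarrow> 's measure \<Rightarrow> ('o \<Rightarrow> 't) \<Rightarrow> 't measure
    \<Rightarrow> ('o \<Rightarrow> 'v) \<Rightarrow> 'v measure \<Rightarrow> bool" where
  "cond_indep M S NS T NT V MV \<longleftrightarrow>
     (\<forall>B\<in>sets NS. \<forall>C\<in>sets NT. AE \<omega> in M.
        real_cond_exp M (sigma_gen M V MV) (\<lambda>\<omega>. indicator B (S \<omega>) * indicator C (T \<omega>)) \<omega>
        = real_cond_exp M (sigma_gen M V MV) (\<lambda>\<omega>. indicator B (S \<omega>)) \<omega>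
          * real_cond_exp M (sigma_gen M V MV) (\<lambda>\<omega>. indicator C (T \<omega>)) \<omega>)"

definition cond_density :: "'o measure \<Rightarrow> 'a measure \<Rightarrow> ('o \<Rightarrow> 'a) \<Rightarrow> ('o \<Rightarrow> 'v) \<Rightarrow> 'v measure
    \<Rightarrow> ('a \<Rightarrow> 'v \<Rightarrow> real) \<Rightarrow> bool" where
  "cond_density M mu A V MV f \<longleftrightarrow>
     (\<lambda>(a, v). f a v) \<in> borel_measurable (mu \<Otimes>\<^sub>M MV) \<and>
     (\<forall>a\<in>space mu. \<forall>v\<in>space MV. 0 \<le> f a v) \<and>
     (\<forall>B\<in>sets mu. AE \<omega> in M.
        real_cond_exp M (sigma_gen M V MV) (\<lambda>\<omega>. indicator B (A \<omega>)) \<omega>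
        = (\<integral>a. indicator B a * f a (V \<omega>) \<partial>mu))"

text \<open>Outcome bridge set: h in L2(W,A,X) with E[Y - h(W,A,X) | G] = 0 (G = (A,U,X) or (Z,A,X)).\<close>
definition outcome_bridges :: "'o measure \<Rightarrow> ('o \<Rightarrow> 'w \<times> 'a \<times> 'x) \<Rightarrow> ('w \<times> 'a \<times> 'x) measure
    \<Rightarrow> ('o \<Rightarrow> real) \<Rightarrow> ('o \<Rightarrow> 'g) \<Rightarrow> 'g measure \<Rightarrow> ('w \<times> 'a \<times> 'x \<Rightarrow> real) set" where
  "outcome_bridges M WAX MWAX Y G MG =
     {h. L2rv M WAX MWAX h \<and> cexp_zero M G MG (\<lambda>\<omega>. Y \<omega> - h (WAX \<omega>))}"

text \<open>Action bridge set: ppi q in L2(Z,A,X) with E[ppi(A|X) (q(Z,A,X) - invf) | G] = 0,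
  where invf is 1/f(A|U,X) or 1/f(A|W,X).\<close>
definition action_bridges :: "'o measure \<Rightarrow> ('a \<Rightarrow> 'x \<Rightarrow> real) \<Rightarrow> ('o \<Rightarrow> 'z) \<Rightarrow> ('o \<Rightarrow> 'a)
    \<Rightarrow> ('o \<Rightarrow> 'x) \<Rightarrow> ('z \<times> 'a \<times> 'x) measure \<Rightarrow> ('o \<Rightarrow> real) \<Rightarrow> ('o \<Rightarrow> 'g) \<Rightarrow> 'g measure
    \<Rightarrow> ('z \<times> 'a \<times> 'x \<Rightarrow> real) set" where
  "action_bridges M ppi Z A X MZAX invf G MG =
     {q. L2rv M (\<lambda>\<omega>. (Z \<omega>, A \<omega>, X \<omega>)) MZAX (\<lambda>(z, a, x). ppi a x * q (z, a, x)) \<and>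
         cexp_zero M G MG (\<lambda>\<omega>. ppi (A \<omega>) (X \<omega>) * (q (Z \<omega>, A \<omega>, X \<omega>) - invf \<omega>))}"

definition Top :: "'a measure \<Rightarrow> ('a \<Rightarrow> 'x \<Rightarrow> real) \<Rightarrow> ('w \<times> 'a \<times> 'x \<Rightarrow> real) \<Rightarrow> 'w \<Rightarrow> 'x \<Rightarrow> real" where
  "Top mu ppi h w x = (\<integral>a. h (w, a, x) * ppi a x \<partial>mu)"

definition argmin_on :: "'b set \<Rightarrow> ('b \<Rightarrow> ereal) \<Rightarrow> 'b set" where
  "argmin_on S F = {s \<in> S. \<forall>t\<in>S. F s \<le> F t}"

end

theory Submission
  imports Defs
begin

text \<open>A bridge h0 annihilates every moment E[q(Z,A,X) (h0 - Y)], so the bridges in H attain the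
  minimal value 0 of the criterion. Conversely, if all moments of h over Q' vanish, closedness
  provides q in Q' that is a version of E[h - h0 | Z,A,X] for a bridge h0; the moment of h - h0
  against this q is E[q^2], hence q = 0 and h is a bridge as well. The action bridges are treated
  the same way once E[pi q0 h] = E[T h] is known for every bridge q0: conditioning on (W,A,X)
  replaces pi q0 by pi / f(A|W,X), and integrating A out against f(.|W,X) yields T h. The last
  step needs f(a|W,X) > 0 wherever pi(a|X) \<noteq> 0, which is inherited from the positivity of
  f(a|U,X) in (NC v) because A and W are independent given (U,X).\<close>

section \<open>Square integrability and conditional moment restrictions\<close>

lemma sigma_finite_subalgebra_sigma_gen:
  assumes "prob_space M" "V \<in> measurable M N"
  shows "sigma_finite_subalgebra M (sigma_gen M V N)"
proof -
  interpret prob_space M by fact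
  have "subalgebra M (sigma_gen M V N)"
    unfolding subalgebra_def sigma_gen_def
    using assms(2) by (auto simp: sets_vimage_algebra2 measurable_def)
  then have "finite_measure_subalgebra M (sigma_gen M V N)"
    by unfold_locales
  then show ?thesis by (rule finite_measure_subalgebra_is_sigma_finite)
qed

lemma measurable_sigma_gen_comp:
  assumes "V \<in> measurable M N" "g \<in> borel_measurable N"
  shows "(\<lambda>\<omega>. g (V \<omega>)) \<in> borel_measurable (sigma_gen M V N)"
  unfolding sigma_gen_def
  using measurable_comp[OF measurable_vimage_algebra1 assms(2), of V "space M"] assms(1)
  by (auto simp: measurable_def o_def)

lemma L2rv_comp:
  assumes "L2rv M V N h" "V \<in> measurable M N"
  shows "(\<lambda>\<omega>. h (V \<omega>)) \<in> borel_measurable M" "integrable M (\<lambda>\<omega>. (h (V \<omega>))\<^sup>2)"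
  using assms unfolding L2rv_def by auto

lemma integrable_mult_of_square_integrable:
  fixes f g :: "_ \<Rightarrow> real"
  assumes "f \<in> borel_measurable M" "g \<in> borel_measurable M"
    and "integrable M (\<lambda>x. (f x)\<^sup>2)" "integrable M (\<lambda>x. (g x)\<^sup>2)"
  shows "integrable M (\<lambda>x. f x * g x)"
proof (rule Bochner_Integration.integrable_bound[of _ "\<lambda>x. (f x)\<^sup>2 + (g x)\<^sup>2"])
  show "integrable M (\<lambda>x. (f x)\<^sup>2 + (g x)\<^sup>2)" using assms by auto
  show "(\<lambda>x. f x * g x) \<in> borel_measurable M" using assms by measurable
  have "\<bar>f x * g x\<bar> \<le> (f x)\<^sup>2 + (g x)\<^sup>2" for x
  proof -
    have "0 \<le> (\<bar>f x\<bar> - \<bar>g x\<bar>)\<^sup>2" by simp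
    then have "2 * (\<bar>f x\<bar> * \<bar>g x\<bar>) \<le> (f x)\<^sup>2 + (g x)\<^sup>2"
      by (simp add: power2_diff mult.assoc)
    moreover have "0 \<le> \<bar>f x\<bar> * \<bar>g x\<bar>" by simp
    ultimately show ?thesis unfolding abs_mult by linarith
  qed
  then show "AE x in M. norm (f x * g x) \<le> norm ((f x)\<^sup>2 + (g x)\<^sup>2)" by simp
qed

lemma square_integrable_diff:
  fixes f g :: "_ \<Rightarrow> real"
  assumes "f \<in> borel_measurable M" "g \<in> borel_measurable M"
    and "integrable M (\<lambda>x. (f x)\<^sup>2)" "integrable M (\<lambda>x. (g x)\<^sup>2)"
  shows "integrable M (\<lambda>x. (f x - g x)\<^sup>2)"
proof -
  have "integrable M (\<lambda>x. (f x)\<^sup>2 + (g x)\<^sup>2 - 2 * (f x * g x))"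
    using assms integrable_mult_of_square_integrable[OF assms] by auto
  then show ?thesis by (simp add: power2_diff algebra_simps)
qed

lemma (in prob_space) integrable_of_square_integrable:
  fixes f :: "_ \<Rightarrow> real"
  assumes "f \<in> borel_measurable M" "integrable M (\<lambda>x. (f x)\<^sup>2)"
  shows "integrable M f"
  using integrable_mult_of_square_integrable[of f M "\<lambda>_. 1"] assms by simp

lemma (in prob_space) integrable_bounded_by_one:
  fixes g :: "_ \<Rightarrow> real"
  assumes "g \<in> borel_measurable M" "\<And>\<omega>. \<bar>g \<omega>\<bar> \<le> 1"
  shows "integrable M g"
  by (rule Bochner_Integration.integrable_bound[of _ "\<lambda>_. 1::real"]) (use assms in auto)

lemma integrable_mult_bounded_by_one:
  fixes g h :: "_ \<Rightarrow> real"
  assumes "integrable M h" "g \<in> borel_measurable M" "\<And>\<omega>. \<bar>g \<omega>\<bar> \<le> 1"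
  shows "integrable M (\<lambda>\<omega>. g \<omega> * h \<omega>)"
proof (rule Bochner_Integration.integrable_bound[of _ "\<lambda>\<omega>. \<bar>h \<omega>\<bar>"])
  show "integrable M (\<lambda>\<omega>. \<bar>h \<omega>\<bar>)" using assms(1) by simp
  show "(\<lambda>\<omega>. g \<omega> * h \<omega>) \<in> borel_measurable M" using assms(1,2) by measurable
  show "AE \<omega> in M. norm (g \<omega> * h \<omega>) \<le> norm \<bar>h \<omega>\<bar>"
    using assms(3) by (auto simp: abs_mult intro!: mult_left_le_one_le)
qed

lemma integral_mult_cexp_zero:
  assumes "prob_space M" "V \<in> measurable M N" "cexp_zero M V N xi"
    and "g \<in> borel_measurable N" "integrable M (\<lambda>\<omega>. g (V \<omega>) * xi \<omega>)"
  shows "(\<integral>\<omega>. g (V \<omega>) * xi \<omega> \<partial>M) = 0"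
proof -
  interpret sigma_finite_subalgebra M "sigma_gen M V N"
    using sigma_finite_subalgebra_sigma_gen assms by blast
  have xi: "integrable M xi" "AE \<omega> in M. real_cond_exp M (sigma_gen M V N) xi \<omega> = 0"
    using assms(3) unfolding cexp_zero_def by auto
  have gV: "(\<lambda>\<omega>. g (V \<omega>)) \<in> borel_measurable (sigma_gen M V N)"
    using measurable_sigma_gen_comp assms by blast
  have "(\<integral>\<omega>. g (V \<omega>) * xi \<omega> \<partial>M) = (\<integral>\<omega>. g (V \<omega>) * real_cond_exp M (sigma_gen M V N) xi \<omega> \<partial>M)"
    using real_cond_exp_intg(2)[OF assms(5) gV] xi by auto
  also have "\<dots> = (\<integral>\<omega>. 0 \<partial>M)"
    by (rule integral_cong_AE) (use xi measurable_compose[OF assms(2) assms(4)] in auto)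
  finally show ?thesis by simp
qed

lemma integral_mult_cexp_version:
  assumes "prob_space M" "V \<in> measurable M N" "cexp_version M V N zeta g"
    and "zeta \<in> borel_measurable M" "integrable M (\<lambda>\<omega>. g (V \<omega>) * zeta \<omega>)"
  shows "(\<integral>\<omega>. g (V \<omega>) * zeta \<omega> \<partial>M) = (\<integral>\<omega>. (g (V \<omega>))\<^sup>2 \<partial>M)"
proof -
  interpret sigma_finite_subalgebra M "sigma_gen M V N"
    using sigma_finite_subalgebra_sigma_gen assms by blast
  have g: "g \<in> borel_measurable N"
    "AE \<omega> in M. g (V \<omega>) = real_cond_exp M (sigma_gen M V N) zeta \<omega>"
    using assms(3) unfolding cexp_version_def by auto
  have gV: "(\<lambda>\<omega>. g (V \<omega>)) \<in> borel_measurable (sigma_gen M V N)"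
    using measurable_sigma_gen_comp assms g by blast
  have "(\<integral>\<omega>. g (V \<omega>) * zeta \<omega> \<partial>M) = (\<integral>\<omega>. g (V \<omega>) * real_cond_exp M (sigma_gen M V N) zeta \<omega> \<partial>M)"
    using real_cond_exp_intg(2)[OF assms(5) gV] assms by auto
  also have "\<dots> = (\<integral>\<omega>. (g (V \<omega>))\<^sup>2 \<partial>M)"
    by (rule integral_cong_AE) (use g gV assms in \<open>auto simp: power2_eq_square\<close>)
  finally show ?thesis .
qed

lemma cexp_zero_add:
  assumes "prob_space M" "V \<in> measurable M N" "cexp_zero M V N xi" "cexp_zero M V N eta"
  shows "cexp_zero M V N (\<lambda>\<omega>. xi \<omega> + eta \<omega>)"
proof -
  interpret sigma_finite_subalgebra M "sigma_gen M V N"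
    using sigma_finite_subalgebra_sigma_gen assms by blast
  have xi: "integrable M xi" "AE \<omega> in M. real_cond_exp M (sigma_gen M V N) xi \<omega> = 0"
    and eta: "integrable M eta" "AE \<omega> in M. real_cond_exp M (sigma_gen M V N) eta \<omega> = 0"
    using assms(3,4) unfolding cexp_zero_def by auto
  have "AE \<omega> in M. real_cond_exp M (sigma_gen M V N) (\<lambda>\<omega>. xi \<omega> + eta \<omega>) \<omega> = 0"
    using real_cond_exp_add[OF xi(1) eta(1)] xi(2) eta(2) by eventually_elim simp
  then show ?thesis using xi(1) eta(1) unfolding cexp_zero_def by simp
qed

lemma cexp_zero_diff:
  assumes "prob_space M" "V \<in> measurable M N" "cexp_zero M V N xi" "cexp_zero M V N eta"
  shows "cexp_zero M V N (\<lambda>\<omega>. xi \<omega> - eta \<omega>)"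
proof -
  interpret sigma_finite_subalgebra M "sigma_gen M V N"
    using sigma_finite_subalgebra_sigma_gen assms by blast
  have xi: "integrable M xi" "AE \<omega> in M. real_cond_exp M (sigma_gen M V N) xi \<omega> = 0"
    and eta: "integrable M eta" "AE \<omega> in M. real_cond_exp M (sigma_gen M V N) eta \<omega> = 0"
    using assms(3,4) unfolding cexp_zero_def by auto
  have "AE \<omega> in M. real_cond_exp M (sigma_gen M V N) (\<lambda>\<omega>. xi \<omega> - eta \<omega>) \<omega> = 0"
    using real_cond_exp_diff[OF xi(1) eta(1)] xi(2) eta(2) by eventually_elim simp
  then show ?thesis using xi(1) eta(1) unfolding cexp_zero_def by simp
qed

text \<open>The integral of g(V) delta equals that of g(V)^2, so an orthogonal version vanishes.\<close>
lemma cexp_zero_if_orthogonal_to_version: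
  assumes "prob_space M" "V \<in> measurable M N" "cexp_version M V N delta g"
    and "integrable M delta" "integrable M (\<lambda>\<omega>. (g (V \<omega>))\<^sup>2)"
    and "integrable M (\<lambda>\<omega>. g (V \<omega>) * delta \<omega>)" "(\<integral>\<omega>. g (V \<omega>) * delta \<omega> \<partial>M) = 0"
  shows "cexp_zero M V N delta"
proof -
  have "(\<integral>\<omega>. (g (V \<omega>))\<^sup>2 \<partial>M) = 0"
    using integral_mult_cexp_version[OF assms(1-3)] assms(4,6,7) by auto
  then have "AE \<omega> in M. (g (V \<omega>))\<^sup>2 = 0"
    using integral_nonneg_eq_0_iff_AE[OF assms(5)] by auto
  then show ?thesis
    using assms(3,4) unfolding cexp_zero_def cexp_version_def by (auto elim: AE_mp)
qed

lemma integral_mult_eq_of_cexp_zero: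
  fixes xi :: "'o \<Rightarrow> real"
  assumes prob: "prob_space M" and V: "V \<in> measurable M N"
    and xi: "xi \<in> borel_measurable M" "integrable M (\<lambda>\<omega>. (xi \<omega>)\<^sup>2)"
    and r: "r \<in> borel_measurable N" and restriction: "cexp_zero M V N (\<lambda>\<omega>. xi \<omega> - r (V \<omega>))"
    and g: "g \<in> borel_measurable N" "integrable M (\<lambda>\<omega>. (g (V \<omega>))\<^sup>2)"
  shows "integrable M (\<lambda>\<omega>. g (V \<omega>) * r (V \<omega>))"
    and "(\<integral>\<omega>. g (V \<omega>) * xi \<omega> \<partial>M) = (\<integral>\<omega>. g (V \<omega>) * r (V \<omega>) \<partial>M)"
proof -
  interpret prob_space M by fact
  define F where "F = sigma_gen M V N"
  interpret sigma_finite_subalgebra M F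
    unfolding F_def using sigma_finite_subalgebra_sigma_gen prob V by blast
  have rV_F: "(\<lambda>\<omega>. r (V \<omega>)) \<in> borel_measurable F"
    unfolding F_def by (rule measurable_sigma_gen_comp[OF V r])
  have gV_F: "(\<lambda>\<omega>. g (V \<omega>)) \<in> borel_measurable F"
    unfolding F_def by (rule measurable_sigma_gen_comp[OF V g(1)])
  have rV: "(\<lambda>\<omega>. r (V \<omega>)) \<in> borel_measurable M" using measurable_compose[OF V r] .
  have gV: "(\<lambda>\<omega>. g (V \<omega>)) \<in> borel_measurable M" using measurable_compose[OF V g(1)] .
  have diff: "integrable M (\<lambda>\<omega>. xi \<omega> - r (V \<omega>))"
    "AE \<omega> in M. real_cond_exp M F (\<lambda>\<omega>. xi \<omega> - r (V \<omega>)) \<omega> = 0"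
    using restriction unfolding cexp_zero_def F_def by auto
  have xi_int: "integrable M xi" using integrable_of_square_integrable[OF xi] .
  have rV_int: "integrable M (\<lambda>\<omega>. r (V \<omega>))"
    using Bochner_Integration.integrable_diff[OF xi_int diff(1)] by simp
  have "AE \<omega> in M. real_cond_exp M F xi \<omega> = real_cond_exp M F (\<lambda>\<omega>. xi \<omega> - r (V \<omega>)) \<omega> + r (V \<omega>)"
    using real_cond_exp_add[OF diff(1) rV_int] real_cond_exp_F_meas[OF rV_int rV_F]
    by eventually_elim simp
  with diff(2) have cond_xi: "AE \<omega> in M. real_cond_exp M F xi \<omega> = r (V \<omega>)"
    by eventually_elim simp
  have gxi: "integrable M (\<lambda>\<omega>. g (V \<omega>) * xi \<omega>)"
    using integrable_mult_of_square_integrable[OF gV xi(1) g(2) xi(2)] .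
  note tower = real_cond_exp_intg[OF gxi gV_F xi(1)]
  have ae: "AE \<omega> in M. g (V \<omega>) * real_cond_exp M F xi \<omega> = g (V \<omega>) * r (V \<omega>)"
    using cond_xi by eventually_elim simp
  have grV: "(\<lambda>\<omega>. g (V \<omega>) * r (V \<omega>)) \<in> borel_measurable M"
    using gV rV by (rule borel_measurable_times)
  show "integrable M (\<lambda>\<omega>. g (V \<omega>) * r (V \<omega>))"
    by (rule integrable_cong_AE_imp[OF tower(1) grV ae])
  have "(\<integral>\<omega>. g (V \<omega>) * real_cond_exp M F xi \<omega> \<partial>M) = (\<integral>\<omega>. g (V \<omega>) * r (V \<omega>) \<partial>M)"
    by (rule integral_cong_AE[OF _ grV ae]) (use gV in measurable)
  with tower(2) show "(\<integral>\<omega>. g (V \<omega>) * xi \<omega> \<partial>M) = (\<integral>\<omega>. g (V \<omega>) * r (V \<omega>) \<partial>M)"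
    by simp
qed

section \<open>Minimax characterisation of the bridge sets\<close>

lemma argmin_on_SUP_square_eq:
  fixes L :: "'s \<Rightarrow> 't \<Rightarrow> real"
  assumes realizable: "B \<inter> S \<noteq> {}" and "T \<noteq> {}"
    and annihilate: "\<And>s t. s \<in> B \<Longrightarrow> t \<in> T \<Longrightarrow> L s t = 0"
    and complete: "\<And>s. s \<in> S \<Longrightarrow> \<forall>t\<in>T. L s t = 0 \<Longrightarrow> s \<in> B"
  shows "B \<inter> S = argmin_on S (\<lambda>s. SUP t\<in>T. ereal ((L s t)\<^sup>2))"
proof -
  define J where "J s = (SUP t\<in>T. ereal ((L s t)\<^sup>2))" for s
  have J_eq_0_iff: "J s = 0 \<longleftrightarrow> (\<forall>t\<in>T. L s t = 0)" for s
  proof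
    assume "J s = 0"
    then have "ereal ((L s t)\<^sup>2) \<le> 0" if "t \<in> T" for t
      unfolding J_def using SUP_upper[OF that, of "\<lambda>t. ereal ((L s t)\<^sup>2)"] by simp
    then show "\<forall>t\<in>T. L s t = 0" by simp
  qed (use \<open>T \<noteq> {}\<close> in \<open>simp add: J_def\<close>)
  have J_nonneg: "0 \<le> J s" for s
  proof -
    obtain t where "t \<in> T" using \<open>T \<noteq> {}\<close> by blast
    then show ?thesis unfolding J_def by (rule SUP_upper2) simp
  qed
  obtain s0 where "s0 \<in> B" "s0 \<in> S" using realizable by blast
  then have "J s0 = 0" using J_eq_0_iff annihilate by blast
  then have "argmin_on S J = {s \<in> S. J s = 0}"
    using \<open>s0 \<in> S\<close> J_nonneg unfolding argmin_on_def by (metis (mono_tags) antisym)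
  also have "\<dots> = B \<inter> S"
    using J_eq_0_iff annihilate complete by blast
  finally show ?thesis unfolding J_def by simp
qed

lemma outcome_bridges_eq_argmin:
  fixes WAX :: "'o \<Rightarrow> 'w \<times> 'a \<times> 'x" and ZAX :: "'o \<Rightarrow> 'r" and Y :: "'o \<Rightarrow> real"
  assumes prob: "prob_space M"
    and WAX: "WAX \<in> measurable M MWAX" and ZAX: "ZAX \<in> measurable M MZAX"
    and Y: "Y \<in> borel_measurable M" "integrable M (\<lambda>\<omega>. (Y \<omega>)\<^sup>2)"
    and H_L2: "\<forall>h\<in>H. L2rv M WAX MWAX h"
    and Q'_L2: "\<forall>q\<in>Q'. L2rv M ZAX MZAX q"
    and realizable: "outcome_bridges M WAX MWAX Y ZAX MZAX \<inter> H \<noteq> {}"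
    and closed: "\<forall>h\<in>H. \<forall>h0\<in>outcome_bridges M WAX MWAX Y ZAX MZAX. \<exists>q\<in>Q'.
                   cexp_version M ZAX MZAX (\<lambda>\<omega>. h (WAX \<omega>) - h0 (WAX \<omega>)) q"
  shows "outcome_bridges M WAX MWAX Y ZAX MZAX \<inter> H
           = argmin_on H (\<lambda>h. SUP q\<in>Q'. ereal ((\<integral>\<omega>. q (ZAX \<omega>) * (h (WAX \<omega>) - Y \<omega>) \<partial>M)\<^sup>2))"
proof -
  interpret prob_space M by fact
  define H0 where "H0 = outcome_bridges M WAX MWAX Y ZAX MZAX"
  define L where "L h q = (\<integral>\<omega>. q (ZAX \<omega>) * (h (WAX \<omega>) - Y \<omega>) \<partial>M)" for h q
  obtain h0 where h0: "h0 \<in> H0" "h0 \<in> H" using realizable unfolding H0_def by auto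
  have H0_L2: "L2rv M WAX MWAX h" if "h \<in> H0" for h
    using that unfolding H0_def outcome_bridges_def by auto
  note q_L2 = L2rv_comp[OF Q'_L2[rule_format] ZAX]
  note h_L2 = L2rv_comp[OF _ WAX]
  have residual_L2: "(\<lambda>\<omega>. h (WAX \<omega>) - Y \<omega>) \<in> borel_measurable M"
    "integrable M (\<lambda>\<omega>. (h (WAX \<omega>) - Y \<omega>)\<^sup>2)" if "L2rv M WAX MWAX h" for h
    using h_L2[OF that] Y square_integrable_diff[of "\<lambda>\<omega>. h (WAX \<omega>)" M Y] by auto
  have integrable_L: "integrable M (\<lambda>\<omega>. q (ZAX \<omega>) * (h (WAX \<omega>) - Y \<omega>))"
    if "q \<in> Q'" "L2rv M WAX MWAX h" for q h
    using integrable_mult_of_square_integrable[OF q_L2(1)[OF that(1)] residual_L2(1)[OF that(2)]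
        q_L2(2)[OF that(1)] residual_L2(2)[OF that(2)]] .
  have annihilate: "L h q = 0" if h: "h \<in> H0" and q: "q \<in> Q'" for h q
  proof -
    have "cexp_zero M ZAX MZAX (\<lambda>\<omega>. Y \<omega> - h (WAX \<omega>))"
      using h unfolding H0_def outcome_bridges_def by auto
    moreover have "q \<in> borel_measurable MZAX" using Q'_L2 q unfolding L2rv_def by auto
    moreover have "integrable M (\<lambda>\<omega>. q (ZAX \<omega>) * (Y \<omega> - h (WAX \<omega>)))"
      using integrable_minus[OF integrable_L[OF q H0_L2[OF h]]] by (simp add: algebra_simps)
    ultimately have "(\<integral>\<omega>. q (ZAX \<omega>) * (Y \<omega> - h (WAX \<omega>)) \<partial>M) = 0"
      by (rule integral_mult_cexp_zero[OF prob ZAX])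
    moreover have "(\<lambda>\<omega>. q (ZAX \<omega>) * (h (WAX \<omega>) - Y \<omega>)) = (\<lambda>\<omega>. - (q (ZAX \<omega>) * (Y \<omega> - h (WAX \<omega>))))"
      by (simp add: algebra_simps)
    ultimately show "L h q = 0" unfolding L_def by simp
  qed
  show ?thesis
    unfolding H0_def[symmetric] L_def[symmetric]
  proof (rule argmin_on_SUP_square_eq[OF _ _ annihilate])
    show "H0 \<inter> H \<noteq> {}" using h0 by blast
    show "Q' \<noteq> {}" using closed h0 unfolding H0_def by blast
  next
    fix h assume h: "h \<in> H" and L0: "\<forall>q\<in>Q'. L h q = 0"
    have hL: "L2rv M WAX MWAX h" and h0L: "L2rv M WAX MWAX h0" using H_L2 h h0 by auto
    obtain q where q: "q \<in> Q'" "cexp_version M ZAX MZAX (\<lambda>\<omega>. h (WAX \<omega>) - h0 (WAX \<omega>)) q"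
      using closed h h0 unfolding H0_def by blast
    have diff_eq: "(\<lambda>\<omega>. q (ZAX \<omega>) * (h (WAX \<omega>) - h0 (WAX \<omega>))) =
        (\<lambda>\<omega>. q (ZAX \<omega>) * (h (WAX \<omega>) - Y \<omega>) - q (ZAX \<omega>) * (h0 (WAX \<omega>) - Y \<omega>))"
      by (auto simp: algebra_simps)
    have h0_bridge: "cexp_zero M ZAX MZAX (\<lambda>\<omega>. Y \<omega> - h0 (WAX \<omega>))"
      using h0 unfolding H0_def outcome_bridges_def by auto
    have "cexp_zero M ZAX MZAX (\<lambda>\<omega>. h (WAX \<omega>) - h0 (WAX \<omega>))"
    proof (rule cexp_zero_if_orthogonal_to_version[OF prob ZAX q(2)])
      show "integrable M (\<lambda>\<omega>. h (WAX \<omega>) - h0 (WAX \<omega>))"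
        using integrable_of_square_integrable[OF h_L2[OF hL]]
          integrable_of_square_integrable[OF h_L2[OF h0L]] by simp
      show "integrable M (\<lambda>\<omega>. (q (ZAX \<omega>))\<^sup>2)" using q_L2[OF q(1)] by blast
      show "integrable M (\<lambda>\<omega>. q (ZAX \<omega>) * (h (WAX \<omega>) - h0 (WAX \<omega>)))"
        unfolding diff_eq using integrable_L[OF q(1) hL] integrable_L[OF q(1) h0L] by auto
      show "(\<integral>\<omega>. q (ZAX \<omega>) * (h (WAX \<omega>) - h0 (WAX \<omega>)) \<partial>M) = 0"
        using L0 annihilate[OF h0(1) q(1)] integrable_L[OF q(1) hL] integrable_L[OF q(1) h0L] q(1)
        unfolding diff_eq L_def by simp
    qed
    with h0_bridge have "cexp_zero M ZAX MZAX (\<lambda>\<omega>. (Y \<omega> - h0 (WAX \<omega>)) - (h (WAX \<omega>) - h0 (WAX \<omega>)))"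
      by (rule cexp_zero_diff[OF prob ZAX])
    then show "h \<in> H0" using hL unfolding H0_def outcome_bridges_def by simp
  qed
qed

lemma action_bridges_eq_argmin:
  fixes WAX :: "'o \<Rightarrow> 'w \<times> 'a \<times> 'x" and Z :: "'o \<Rightarrow> 'z" and A :: "'o \<Rightarrow> 'a" and X :: "'o \<Rightarrow> 'x"
    and Th :: "('w \<times> 'a \<times> 'x \<Rightarrow> real) \<Rightarrow> 'o \<Rightarrow> real" and r :: "'o \<Rightarrow> real"
  defines "ZAX \<equiv> \<lambda>\<omega>. (Z \<omega>, A \<omega>, X \<omega>)"
  assumes prob: "prob_space M"
    and WAX: "WAX \<in> measurable M MWAX" and ZAX: "ZAX \<in> measurable M MZAX"
    and Q_L2: "\<forall>q\<in>Q. L2rv M ZAX MZAX (\<lambda>(z, a, x). ppi a x * q (z, a, x))"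
    and H'_L2: "\<forall>h\<in>H'. L2rv M WAX MWAX h"
    and realizable: "action_bridges M ppi Z A X MZAX r WAX MWAX \<inter> Q \<noteq> {}"
    and closed: "\<forall>q\<in>Q. \<forall>q0\<in>action_bridges M ppi Z A X MZAX r WAX MWAX.
                   \<exists>h\<in>H'. cexp_version M WAX MWAX
                     (\<lambda>\<omega>. ppi (A \<omega>) (X \<omega>) * q (ZAX \<omega>) - ppi (A \<omega>) (X \<omega>) * q0 (ZAX \<omega>)) h"
    and bridge_moment: "\<And>q0 h. q0 \<in> action_bridges M ppi Z A X MZAX r WAX MWAX \<Longrightarrow> h \<in> H' \<Longrightarrow>
                 integrable M (Th h) \<and>
                 (\<integral>\<omega>. ppi (A \<omega>) (X \<omega>) * q0 (ZAX \<omega>) * h (WAX \<omega>) \<partial>M) = (\<integral>\<omega>. Th h \<omega> \<partial>M)"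
  shows "action_bridges M ppi Z A X MZAX r WAX MWAX \<inter> Q
           = argmin_on Q (\<lambda>q. SUP h\<in>H'. ereal ((\<integral>\<omega>. ppi (A \<omega>) (X \<omega>) * q (ZAX \<omega>) * h (WAX \<omega>)
                                                  - Th h \<omega> \<partial>M)\<^sup>2))"
proof -
  interpret prob_space M by fact
  define Q0 where "Q0 = action_bridges M ppi Z A X MZAX r WAX MWAX"
  define PQ where "PQ q \<omega> = ppi (A \<omega>) (X \<omega>) * q (ZAX \<omega>)" for q \<omega>
  define L where "L q h = (\<integral>\<omega>. PQ q \<omega> * h (WAX \<omega>) - Th h \<omega> \<partial>M)" for q h
  obtain q0 where q0: "q0 \<in> Q0" "q0 \<in> Q" using realizable unfolding Q0_def by auto
  have Q0_L2: "L2rv M ZAX MZAX (\<lambda>(z, a, x). ppi a x * q (z, a, x))" if "q \<in> Q0" for q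
    using that unfolding Q0_def action_bridges_def ZAX_def by auto
  have PQ_L2: "PQ q \<in> borel_measurable M" "integrable M (\<lambda>\<omega>. (PQ q \<omega>)\<^sup>2)"
    if "L2rv M ZAX MZAX (\<lambda>(z, a, x). ppi a x * q (z, a, x))" for q
    using L2rv_comp[OF that ZAX] unfolding PQ_def ZAX_def by simp_all
  note h_L2 = L2rv_comp[OF H'_L2[rule_format] WAX]
  have integrable_PQ_h: "integrable M (\<lambda>\<omega>. PQ q \<omega> * h (WAX \<omega>))"
    if "L2rv M ZAX MZAX (\<lambda>(z, a, x). ppi a x * q (z, a, x))" "h \<in> H'" for q h
    using integrable_mult_of_square_integrable[OF PQ_L2(1)[OF that(1)] h_L2(1)[OF that(2)]
        PQ_L2(2)[OF that(1)] h_L2(2)[OF that(2)]] .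
  have Th_integrable: "integrable M (Th h)" if "h \<in> H'" for h
    using bridge_moment[of q0 h] q0(1) that unfolding Q0_def by blast
  have L_eq: "L q h = (\<integral>\<omega>. PQ q \<omega> * h (WAX \<omega>) \<partial>M) - (\<integral>\<omega>. Th h \<omega> \<partial>M)"
    if "L2rv M ZAX MZAX (\<lambda>(z, a, x). ppi a x * q (z, a, x))" "h \<in> H'" for q h
    unfolding L_def using integrable_PQ_h[OF that] Th_integrable[OF that(2)] by simp
  have annihilate: "L q h = 0" if "q \<in> Q0" "h \<in> H'" for q h
    using L_eq[OF Q0_L2[OF that(1)] that(2)] bridge_moment[of q h] that
    unfolding Q0_def PQ_def by (simp add: ac_simps)
  show ?thesis
    unfolding Q0_def[symmetric] PQ_def[symmetric] L_def[symmetric]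
  proof (rule argmin_on_SUP_square_eq[OF _ _ annihilate])
    show "Q0 \<inter> Q \<noteq> {}" using q0 by blast
    show "H' \<noteq> {}" using closed q0 unfolding Q0_def by blast
  next
    fix q assume q: "q \<in> Q" and L0: "\<forall>h\<in>H'. L q h = 0"
    have qL: "L2rv M ZAX MZAX (\<lambda>(z, a, x). ppi a x * q (z, a, x))" using Q_L2 q by blast
    note q0L = Q0_L2[OF q0(1)]
    obtain h where h: "h \<in> H'" "cexp_version M WAX MWAX (\<lambda>\<omega>. PQ q \<omega> - PQ q0 \<omega>) h"
      using closed q q0 unfolding Q0_def PQ_def by blast
    have diff_eq: "(\<lambda>\<omega>. h (WAX \<omega>) * (PQ q \<omega> - PQ q0 \<omega>)) =
        (\<lambda>\<omega>. PQ q \<omega> * h (WAX \<omega>) - PQ q0 \<omega> * h (WAX \<omega>))"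
      by (auto simp: algebra_simps)
    have "cexp_zero M WAX MWAX (\<lambda>\<omega>. PQ q \<omega> - PQ q0 \<omega>)"
    proof (rule cexp_zero_if_orthogonal_to_version[OF prob WAX h(2)])
      show "integrable M (\<lambda>\<omega>. PQ q \<omega> - PQ q0 \<omega>)"
        using integrable_of_square_integrable[OF PQ_L2[OF qL]]
          integrable_of_square_integrable[OF PQ_L2[OF q0L]] by simp
      show "integrable M (\<lambda>\<omega>. (h (WAX \<omega>))\<^sup>2)" using h_L2[OF h(1)] by blast
      show "integrable M (\<lambda>\<omega>. h (WAX \<omega>) * (PQ q \<omega> - PQ q0 \<omega>))"
        unfolding diff_eq using integrable_PQ_h[OF qL h(1)] integrable_PQ_h[OF q0L h(1)] by simp
      show "(\<integral>\<omega>. h (WAX \<omega>) * (PQ q \<omega> - PQ q0 \<omega>) \<partial>M) = 0"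
        using L0 h(1) annihilate[OF q0(1) h(1)] L_eq[OF qL h(1)] L_eq[OF q0L h(1)]
          integrable_PQ_h[OF qL h(1)] integrable_PQ_h[OF q0L h(1)]
        unfolding diff_eq by simp
    qed
    moreover have "cexp_zero M WAX MWAX (\<lambda>\<omega>. ppi (A \<omega>) (X \<omega>) * (q0 (ZAX \<omega>) - r \<omega>))"
      using q0(1) unfolding Q0_def action_bridges_def ZAX_def by simp
    ultimately have "cexp_zero M WAX MWAX
        (\<lambda>\<omega>. (PQ q \<omega> - PQ q0 \<omega>) + ppi (A \<omega>) (X \<omega>) * (q0 (ZAX \<omega>) - r \<omega>))"
      by (rule cexp_zero_add[OF prob WAX])
    moreover have "(\<lambda>\<omega>. (PQ q \<omega> - PQ q0 \<omega>) + ppi (A \<omega>) (X \<omega>) * (q0 (ZAX \<omega>) - r \<omega>))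
        = (\<lambda>\<omega>. ppi (A \<omega>) (X \<omega>) * (q (ZAX \<omega>) - r \<omega>))"
      unfolding PQ_def by (simp add: algebra_simps)
    ultimately show "q \<in> Q0" using qL unfolding Q0_def action_bridges_def ZAX_def by simp
  qed
qed

section \<open>Conditional densities\<close>

lemma measure_eq_on_rectangles:
  assumes sets1: "sets N1 = sets (M1 \<Otimes>\<^sub>M M2)" and sets2: "sets N2 = sets (M1 \<Otimes>\<^sub>M M2)"
    and finite: "emeasure N1 (space M1 \<times> space M2) \<noteq> \<infinity>"
    and rect: "\<And>C B. C \<in> sets M1 \<Longrightarrow> B \<in> sets M2 \<Longrightarrow> emeasure N1 (C \<times> B) = emeasure N2 (C \<times> B)"
  shows "N1 = N2"
proof (rule measure_eqI_generator_eq[OF Int_stable_pair_measure_generator[of M1 M2],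
      where A="\<lambda>_. space M1 \<times> space M2"])
  show "{a \<times> b |a b. a \<in> sets M1 \<and> b \<in> sets M2} \<subseteq> Pow (space M1 \<times> space M2)"
    using sets.space_closed[of M1] sets.space_closed[of M2] by auto
  show "sets N1 = sigma_sets (space M1 \<times> space M2) {a \<times> b |a b. a \<in> sets M1 \<and> b \<in> sets M2}"
    "sets N2 = sigma_sets (space M1 \<times> space M2) {a \<times> b |a b. a \<in> sets M1 \<and> b \<in> sets M2}"
    using sets1 sets2 by (simp_all add: sets_pair_measure)
qed (use finite rect in auto)

lemma (in prob_space) integral_indicator_mult_eq_nn_integral:
  fixes g :: "'a \<Rightarrow> real"
  assumes "integrable M g" "AE \<omega> in M. 0 \<le> g \<omega>" "S \<in> sets M"
  shows "(\<integral>\<^sup>+ \<omega>. ennreal (indicator S \<omega> * g \<omega>) \<partial>M) = ennreal (\<integral>\<omega>. indicator S \<omega> * g \<omega> \<partial>M)"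
  using assms by (intro nn_integral_eq_integral integrable_mult_indicator[OF assms(3,1), simplified])
    (auto simp: indicator_def)

lemma (in prob_space) emeasure_distr_density_eq_integral:
  fixes g :: "'a \<Rightarrow> real"
  assumes V: "V \<in> measurable M N" and g: "integrable M g" "AE \<omega> in M. 0 \<le> g \<omega>"
    and C: "C \<in> sets N"
  shows "emeasure (distr (density M (\<lambda>\<omega>. ennreal (g \<omega>))) N V) C
       = ennreal (\<integral>\<omega>. indicator C (V \<omega>) * g \<omega> \<partial>M)"
proof -
  have S: "V -` C \<inter> space M \<in> sets M" by (rule measurable_sets[OF V C])
  have "emeasure (distr (density M (\<lambda>\<omega>. ennreal (g \<omega>))) N V) C
      = emeasure (density M (\<lambda>\<omega>. ennreal (g \<omega>))) (V -` C \<inter> space M)"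
    using emeasure_distr[of V "density M (\<lambda>\<omega>. ennreal (g \<omega>))" N C] V C by simp
  also have "\<dots> = (\<integral>\<^sup>+ \<omega>. ennreal (g \<omega>) * indicator (V -` C \<inter> space M) \<omega> \<partial>M)"
    by (rule emeasure_density) (use g S in auto)
  also have "\<dots> = (\<integral>\<^sup>+ \<omega>. ennreal (indicator (V -` C \<inter> space M) \<omega> * g \<omega>) \<partial>M)"
    by (rule nn_integral_cong) (simp add: indicator_def)
  also have "\<dots> = ennreal (\<integral>\<omega>. indicator (V -` C \<inter> space M) \<omega> * g \<omega> \<partial>M)"
    by (rule integral_indicator_mult_eq_nn_integral[OF g S])
  also have "\<dots> = ennreal (\<integral>\<omega>. indicator C (V \<omega>) * g \<omega> \<partial>M)"
    by (intro arg_cong[where f=ennreal] Bochner_Integration.integral_cong) (auto simp: indicator_def)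
  finally show ?thesis .
qed

lemma AE_cond_density_nn_integral:
  assumes prob: "prob_space M" and A: "A \<in> measurable M mu" and V: "V \<in> measurable M MV"
    and dens: "cond_density M mu A V MV f" and B: "B \<in> sets mu"
  shows "AE \<omega> in M. (\<integral>\<^sup>+ a. ennreal (indicator B a * f a (V \<omega>)) \<partial>mu) =
           ennreal (real_cond_exp M (sigma_gen M V MV) (\<lambda>\<omega>. indicator B (A \<omega>)) \<omega>)"
proof -
  interpret prob_space M by fact
  interpret sigma_finite_subalgebra M "sigma_gen M V MV"
    using sigma_finite_subalgebra_sigma_gen prob V by blast
  have f_nonneg: "\<forall>a\<in>space mu. \<forall>v\<in>space MV. 0 \<le> f a v"
    and cond: "\<forall>B\<in>sets mu. AE \<omega> in M.
        real_cond_exp M (sigma_gen M V MV) (\<lambda>\<omega>. indicator B (A \<omega>)) \<omega>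
        = (\<integral>a. indicator B a * f a (V \<omega>) \<partial>mu)"
    using dens unfolding cond_density_def by auto
  have "AE \<omega> in M. real_cond_exp M (sigma_gen M V MV) (\<lambda>\<omega>. indicator (space mu) (A \<omega>)) \<omega>
        = real_cond_exp M (sigma_gen M V MV) (\<lambda>\<omega>. 1) \<omega>"
  proof (rule real_cond_exp_cong)
    show "AE \<omega> in M. indicator (space mu) (A \<omega>) = (1::real)"
      using A by (auto simp: measurable_def indicator_def Pi_iff intro!: AE_I2)
    show "(\<lambda>\<omega>. indicator (space mu) (A \<omega>) :: real) \<in> borel_measurable M"
      using A by measurable
  qed auto
  moreover have "AE \<omega> in M. real_cond_exp M (sigma_gen M V MV) (\<lambda>\<omega>. 1) \<omega> = 1"
    by (rule real_cond_exp_F_meas) auto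
  ultimately have total_mass: "AE \<omega> in M. (\<integral>a. indicator (space mu) a * f a (V \<omega>) \<partial>mu) = 1"
    using cond[rule_format, OF sets.top] by eventually_elim simp
  show ?thesis
    using total_mass cond[rule_format, OF B] AE_space
  proof eventually_elim
    case (elim \<omega>)
    have "V \<omega> \<in> space MV" using elim V by (auto simp: measurable_def)
    have "integrable mu (\<lambda>a. indicator (space mu) a * f a (V \<omega>))"
      using elim(1) not_integrable_integral_eq by fastforce
    then have "integrable mu (\<lambda>a. f a (V \<omega>))"
      by (rule iffD1[OF Bochner_Integration.integrable_cong, rotated -1]) auto
    from integrable_mult_indicator[OF B this]
    have "integrable mu (\<lambda>a. indicator B a * f a (V \<omega>))" by simp
    then show ?case
      using elim(2) f_nonneg \<open>V \<omega> \<in> space MV\<close>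
      by (subst nn_integral_eq_integral) (auto simp: indicator_def)
  qed
qed

text \<open>The law of (V, a) when a is drawn from the density f(. | U) given U: for U = V this is the
  law of (V, A), and for a finer U the conditional independence assumption makes it so.\<close>
definition cond_density_mixture :: "'o measure \<Rightarrow> 'a measure \<Rightarrow> 'v measure \<Rightarrow> ('o \<Rightarrow> 'v)
    \<Rightarrow> ('o \<Rightarrow> 'u) \<Rightarrow> ('a \<Rightarrow> 'u \<Rightarrow> real) \<Rightarrow> ('v \<times> 'a) measure" where
  "cond_density_mixture M mu MV V U f =
     distr (density (M \<Otimes>\<^sub>M mu) (\<lambda>(\<omega>, a). ennreal (f a (U \<omega>)))) (MV \<Otimes>\<^sub>M mu) (\<lambda>(\<omega>, a). (V \<omega>, a))"

lemma cond_density_measurable: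
  assumes "cond_density M mu A U MU f" "U \<in> measurable M MU"
  shows "(\<lambda>(\<omega>, a). f a (U \<omega>)) \<in> borel_measurable (M \<Otimes>\<^sub>M mu)"
proof -
  have "(\<lambda>(a, u). f a u) \<in> borel_measurable (mu \<Otimes>\<^sub>M MU)"
    using assms(1) unfolding cond_density_def by auto
  from measurable_compose[OF _ this, of "\<lambda>(\<omega>, a). (a, U \<omega>)"] show ?thesis
    using assms(2) by (simp add: split_beta') measurable
qed

lemma emeasure_cond_density_mixture:
  assumes sf: "sigma_finite_measure mu" and U: "U \<in> measurable M MU" and V: "V \<in> measurable M MV"
    and dens: "cond_density M mu A U MU f" and R: "R \<in> sets (MV \<Otimes>\<^sub>M mu)"
  shows "emeasure (cond_density_mixture M mu MV V U f) R
       = (\<integral>\<^sup>+ \<omega>. \<integral>\<^sup>+ a. ennreal (f a (U \<omega>)) * indicator R (V \<omega>, a) \<partial>mu \<partial>M)"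
proof -
  interpret mu: sigma_finite_measure mu by fact
  define k where "k = (\<lambda>(\<omega>, a). ennreal (f a (U \<omega>)))"
  define T where "T = (\<lambda>(\<omega>, a::'a). (V \<omega>, a))"
  have k: "k \<in> borel_measurable (M \<Otimes>\<^sub>M mu)"
    using cond_density_measurable[OF dens U] unfolding k_def by measurable
  have T: "T \<in> measurable (M \<Otimes>\<^sub>M mu) (MV \<Otimes>\<^sub>M mu)"
    unfolding T_def using V by measurable
  have pre: "T -` R \<inter> space (M \<Otimes>\<^sub>M mu) \<in> sets (M \<Otimes>\<^sub>M mu)"
    by (rule measurable_sets[OF T R])
  have "emeasure (cond_density_mixture M mu MV V U f) R
      = emeasure (density (M \<Otimes>\<^sub>M mu) k) (T -` R \<inter> space (M \<Otimes>\<^sub>M mu))"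
    unfolding cond_density_mixture_def k_def[symmetric] T_def[symmetric]
    using emeasure_distr[of T "density (M \<Otimes>\<^sub>M mu) k" "MV \<Otimes>\<^sub>M mu" R] T R by simp
  also have "\<dots> = (\<integral>\<^sup>+ x. k x * indicator (T -` R \<inter> space (M \<Otimes>\<^sub>M mu)) x \<partial>(M \<Otimes>\<^sub>M mu))"
    by (rule emeasure_density[OF k pre])
  also have "\<dots> = (\<integral>\<^sup>+ \<omega>. \<integral>\<^sup>+ a. k (\<omega>, a) * indicator (T -` R \<inter> space (M \<Otimes>\<^sub>M mu)) (\<omega>, a) \<partial>mu \<partial>M)"
    by (rule mu.nn_integral_fst[symmetric]) (use k pre in measurable)
  also have "\<dots> = (\<integral>\<^sup>+ \<omega>. \<integral>\<^sup>+ a. ennreal (f a (U \<omega>)) * indicator R (V \<omega>, a) \<partial>mu \<partial>M)"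
    by (intro nn_integral_cong) (simp add: k_def T_def indicator_def space_pair_measure)
  finally show ?thesis .
qed

lemma (in prob_space) emeasure_distr_pair_rectangle:
  assumes V: "V \<in> measurable M MV" and A: "A \<in> measurable M mu"
    and C: "C \<in> sets MV" and B: "B \<in> sets mu"
  shows "emeasure (distr M (MV \<Otimes>\<^sub>M mu) (\<lambda>\<omega>. (V \<omega>, A \<omega>))) (C \<times> B)
       = ennreal (\<integral>\<omega>. indicator C (V \<omega>) * indicator B (A \<omega>) \<partial>M)"
proof -
  have VA: "(\<lambda>\<omega>. (V \<omega>, A \<omega>)) \<in> measurable M (MV \<Otimes>\<^sub>M mu)" using V A by measurable
  have CB: "C \<times> B \<in> sets (MV \<Otimes>\<^sub>M mu)" using C B by simp
  have "emeasure (distr M (MV \<Otimes>\<^sub>M mu) (\<lambda>\<omega>. (V \<omega>, A \<omega>))) (C \<times> B)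
      = emeasure M ((\<lambda>\<omega>. (V \<omega>, A \<omega>)) -` (C \<times> B) \<inter> space M)"
    by (rule emeasure_distr[OF VA CB])
  also have "\<dots> = ennreal (\<integral>\<omega>. indicator ((\<lambda>\<omega>. (V \<omega>, A \<omega>)) -` (C \<times> B) \<inter> space M) \<omega> \<partial>M)"
    using measurable_sets[OF VA CB] by (simp add: emeasure_eq_measure)
  also have "\<dots> = ennreal (\<integral>\<omega>. indicator C (V \<omega>) * indicator B (A \<omega>) \<partial>M)"
    by (intro arg_cong[where f=ennreal] Bochner_Integration.integral_cong) (auto simp: indicator_def)
  finally show ?thesis .
qed

lemma emeasure_cond_density_mixture_rectangle:
  assumes prob: "prob_space M" and sf: "sigma_finite_measure mu"
    and A: "A \<in> measurable M mu" and U: "U \<in> measurable M MU" and V: "V \<in> measurable M MV"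
    and dens: "cond_density M mu A U MU f" and C: "C \<in> sets MV" and B: "B \<in> sets mu"
  shows "emeasure (cond_density_mixture M mu MV V U f) (C \<times> B)
       = ennreal (\<integral>\<omega>. indicator C (V \<omega>) *
           real_cond_exp M (sigma_gen M U MU) (\<lambda>\<omega>. indicator B (A \<omega>)) \<omega> \<partial>M)"
proof -
  interpret prob_space M by fact
  interpret sigma_finite_subalgebra M "sigma_gen M U MU"
    using sigma_finite_subalgebra_sigma_gen prob U by blast
  define ce where "ce = real_cond_exp M (sigma_gen M U MU) (\<lambda>\<omega>. indicator B (A \<omega>))"
  have iB: "(\<lambda>\<omega>. indicator B (A \<omega>) :: real) \<in> borel_measurable M" using A B by measurable
  have S: "V -` C \<inter> space M \<in> sets M" using measurable_sets[OF V C] .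
  have "emeasure (cond_density_mixture M mu MV V U f) (C \<times> B)
      = (\<integral>\<^sup>+ \<omega>. \<integral>\<^sup>+ a. ennreal (f a (U \<omega>)) * indicator (C \<times> B) (V \<omega>, a) \<partial>mu \<partial>M)"
    using emeasure_cond_density_mixture[OF sf U V dens] C B by simp
  also have "\<dots> = (\<integral>\<^sup>+ \<omega>. ennreal (indicator (V -` C \<inter> space M) \<omega> * ce \<omega>) \<partial>M)"
  proof (rule nn_integral_cong_AE)
    show "AE \<omega> in M. (\<integral>\<^sup>+ a. ennreal (f a (U \<omega>)) * indicator (C \<times> B) (V \<omega>, a) \<partial>mu)
        = ennreal (indicator (V -` C \<inter> space M) \<omega> * ce \<omega>)"
      using AE_cond_density_nn_integral[OF prob A U dens B] AE_space
    proof eventually_elim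
      case (elim \<omega>)
      show ?case
      proof (cases "V \<omega> \<in> C")
        case True
        have "(\<integral>\<^sup>+ a. ennreal (f a (U \<omega>)) * indicator (C \<times> B) (V \<omega>, a) \<partial>mu)
            = (\<integral>\<^sup>+ a. ennreal (indicator B a * f a (U \<omega>)) \<partial>mu)"
          by (rule nn_integral_cong) (use True in \<open>simp add: indicator_def\<close>)
        then show ?thesis using elim True unfolding ce_def by simp
      qed simp
    qed
  qed
  also have "\<dots> = ennreal (\<integral>\<omega>. indicator (V -` C \<inter> space M) \<omega> * ce \<omega> \<partial>M)"
    unfolding ce_def using iB integrable_bounded_by_one[OF iB]
    by (intro integral_indicator_mult_eq_nn_integral[OF _ _ S] real_cond_exp_pos) (auto simp: indicator_def)
  also have "\<dots> = ennreal (\<integral>\<omega>. indicator C (V \<omega>) * ce \<omega> \<partial>M)"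
    by (intro arg_cong[where f=ennreal] Bochner_Integration.integral_cong) (auto simp: indicator_def)
  finally show ?thesis unfolding ce_def .
qed

lemma distr_pair_eq_cond_density_mixture:
  assumes prob: "prob_space M" and sf: "sigma_finite_measure mu"
    and A: "A \<in> measurable M mu" and U: "U \<in> measurable M MU" and V: "V \<in> measurable M MV"
    and dens: "cond_density M mu A U MU f"
    and rect: "\<And>B C. B \<in> sets mu \<Longrightarrow> C \<in> sets MV \<Longrightarrow>
       (\<integral>\<omega>. indicator C (V \<omega>) * indicator B (A \<omega>) \<partial>M)
       = (\<integral>\<omega>. indicator C (V \<omega>) * real_cond_exp M (sigma_gen M U MU) (\<lambda>\<omega>. indicator B (A \<omega>)) \<omega> \<partial>M)"
  shows "distr M (MV \<Otimes>\<^sub>M mu) (\<lambda>\<omega>. (V \<omega>, A \<omega>)) = cond_density_mixture M mu MV V U f"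
proof (rule measure_eq_on_rectangles)
  interpret prob_space M by fact
  interpret law: prob_space "distr M (MV \<Otimes>\<^sub>M mu) (\<lambda>\<omega>. (V \<omega>, A \<omega>))"
    using V A by (intro prob_space_distr) measurable
  show "emeasure (distr M (MV \<Otimes>\<^sub>M mu) (\<lambda>\<omega>. (V \<omega>, A \<omega>))) (space MV \<times> space mu) \<noteq> \<infinity>"
    by simp
  show "sets (cond_density_mixture M mu MV V U f) = sets (MV \<Otimes>\<^sub>M mu)"
    by (simp add: cond_density_mixture_def)
  fix C B assume "C \<in> sets MV" "B \<in> sets mu"
  then show "emeasure (distr M (MV \<Otimes>\<^sub>M mu) (\<lambda>\<omega>. (V \<omega>, A \<omega>))) (C \<times> B) =
      emeasure (cond_density_mixture M mu MV V U f) (C \<times> B)"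
    using emeasure_distr_pair_rectangle[OF V A] rect
      emeasure_cond_density_mixture_rectangle[OF prob sf A U V dens] by simp
qed simp

lemma distr_pair_eq_cond_density_mixture_self:
  assumes prob: "prob_space M" and sf: "sigma_finite_measure mu"
    and A: "A \<in> measurable M mu" and V: "V \<in> measurable M MV"
    and dens: "cond_density M mu A V MV f"
  shows "distr M (MV \<Otimes>\<^sub>M mu) (\<lambda>\<omega>. (V \<omega>, A \<omega>)) = cond_density_mixture M mu MV V V f"
proof (rule distr_pair_eq_cond_density_mixture[OF prob sf A V V dens])
  interpret prob_space M by fact
  interpret sigma_finite_subalgebra M "sigma_gen M V MV"
    using sigma_finite_subalgebra_sigma_gen prob V by blast
  fix B C assume B: "B \<in> sets mu" and C: "C \<in> sets MV"
  have iB: "(\<lambda>\<omega>. indicator B (A \<omega>) :: real) \<in> borel_measurable M" using A B by measurable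
  have iC: "(\<lambda>\<omega>. indicator C (V \<omega>) :: real) \<in> borel_measurable (sigma_gen M V MV)"
    by (rule measurable_sigma_gen_comp[OF V]) (use C in measurable)
  have iC': "(\<lambda>\<omega>. indicator C (V \<omega>) :: real) \<in> borel_measurable M" using V C by measurable
  have "integrable M (\<lambda>\<omega>. indicator C (V \<omega>) * indicator B (A \<omega>) :: real)"
    by (rule integrable_mult_bounded_by_one[OF integrable_bounded_by_one[OF iB] iC'])
      (auto simp: indicator_def)
  from real_cond_exp_intg(2)[OF this iC iB]
  show "(\<integral>\<omega>. indicator C (V \<omega>) * indicator B (A \<omega>) \<partial>M) =
      (\<integral>\<omega>. indicator C (V \<omega>) * real_cond_exp M (sigma_gen M V MV) (\<lambda>\<omega>. indicator B (A \<omega>)) \<omega> \<partial>M)"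
    by simp
qed

lemma integral_cond_density:
  fixes G :: "'v \<Rightarrow> 'a \<Rightarrow> real"
  assumes prob: "prob_space M" and sf: "sigma_finite_measure mu"
    and A: "A \<in> measurable M mu" and V: "V \<in> measurable M MV"
    and dens: "cond_density M mu A V MV f"
    and G: "(\<lambda>(v, a). G v a) \<in> borel_measurable (MV \<Otimes>\<^sub>M mu)"
    and integrable_G: "integrable M (\<lambda>\<omega>. G (V \<omega>) (A \<omega>))"
  shows "integrable M (\<lambda>\<omega>. \<integral>a. f a (V \<omega>) * G (V \<omega>) a \<partial>mu)"
    and "(\<integral>\<omega>. G (V \<omega>) (A \<omega>) \<partial>M) = (\<integral>\<omega>. \<integral>a. f a (V \<omega>) * G (V \<omega>) a \<partial>mu \<partial>M)"
proof -
  interpret prob_space M by fact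
  interpret mu: sigma_finite_measure mu by fact
  interpret pair_sigma_finite M mu ..
  define k where "k = (\<lambda>(\<omega>, a). f a (V \<omega>))"
  define T where "T = (\<lambda>(\<omega>, a::'a). (V \<omega>, a))"
  have VA: "(\<lambda>\<omega>. (V \<omega>, A \<omega>)) \<in> measurable M (MV \<Otimes>\<^sub>M mu)" using V A by measurable
  have T: "T \<in> measurable (M \<Otimes>\<^sub>M mu) (MV \<Otimes>\<^sub>M mu)" unfolding T_def using V by measurable
  have k: "k \<in> borel_measurable (M \<Otimes>\<^sub>M mu)"
    unfolding k_def by (rule cond_density_measurable[OF dens V])
  have k_nonneg: "AE x in M \<Otimes>\<^sub>M mu. 0 \<le> k x"
    using dens measurable_space[OF V] unfolding cond_density_def k_def
    by (intro AE_I2) (auto simp: space_pair_measure)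
  have GT: "(\<lambda>x. (\<lambda>(v, a). G v a) (T x)) \<in> borel_measurable (M \<Otimes>\<^sub>M mu)"
    using measurable_compose[OF T G] by (simp add: o_def)
  have law: "distr M (MV \<Otimes>\<^sub>M mu) (\<lambda>\<omega>. (V \<omega>, A \<omega>)) = distr (density (M \<Otimes>\<^sub>M mu) k) (MV \<Otimes>\<^sub>M mu) T"
    using distr_pair_eq_cond_density_mixture_self[OF prob sf A V dens]
    unfolding cond_density_mixture_def k_def T_def by (simp add: split_beta')
  have T': "T \<in> measurable (density (M \<Otimes>\<^sub>M mu) k) (MV \<Otimes>\<^sub>M mu)" using T by simp
  have integrable_eq: "integrable M (\<lambda>\<omega>. G (V \<omega>) (A \<omega>)) \<longleftrightarrow>
      integrable (M \<Otimes>\<^sub>M mu) (\<lambda>x. k x * (\<lambda>(v, a). G v a) (T x))"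
    using integrable_distr_eq[OF VA G] law integrable_distr_eq[OF T' G]
      integrable_density[OF GT k k_nonneg] by simp
  have integral_eq: "(\<integral>\<omega>. G (V \<omega>) (A \<omega>) \<partial>M) = (\<integral>x. k x * (\<lambda>(v, a). G v a) (T x) \<partial>(M \<Otimes>\<^sub>M mu))"
    using integral_distr[OF VA G] law integral_distr[OF T' G]
      integral_density[OF GT k k_nonneg] by simp
  have product: "integrable (M \<Otimes>\<^sub>M mu) (\<lambda>(\<omega>, a). f a (V \<omega>) * G (V \<omega>) a)"
    using integrable_G integrable_eq unfolding k_def T_def by (simp add: split_beta')
  show "integrable M (\<lambda>\<omega>. \<integral>a. f a (V \<omega>) * G (V \<omega>) a \<partial>mu)"
    using integrable_fst'[OF product] by simp
  show "(\<integral>\<omega>. G (V \<omega>) (A \<omega>) \<partial>M) = (\<integral>\<omega>. \<integral>a. f a (V \<omega>) * G (V \<omega>) a \<partial>mu \<partial>M)"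
    using integral_eq integral_fst'[OF product] unfolding k_def T_def by (simp add: split_beta')
qed

lemma AE_cond_density_nonzero_transfer:
  fixes P :: "'v \<Rightarrow> 'a \<Rightarrow> bool"
  assumes prob: "prob_space M" and sf: "sigma_finite_measure mu"
    and A: "A \<in> measurable M mu" and U: "U \<in> measurable M MU" and V: "V \<in> measurable M MV"
    and dens_U: "cond_density M mu A U MU fU" and dens_V: "cond_density M mu A V MV fV"
    and law_U: "distr M (MV \<Otimes>\<^sub>M mu) (\<lambda>\<omega>. (V \<omega>, A \<omega>)) = cond_density_mixture M mu MV V U fU"
    and P: "{x \<in> space (MV \<Otimes>\<^sub>M mu). P (fst x) (snd x)} \<in> sets (MV \<Otimes>\<^sub>M mu)"
    and positive: "\<forall>\<omega>\<in>space M. \<forall>a\<in>space mu. P (V \<omega>) a \<longrightarrow> fU a (U \<omega>) \<noteq> 0"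
  shows "AE \<omega> in M. AE a in mu. P (V \<omega>) a \<longrightarrow> fV a (V \<omega>) \<noteq> 0"
proof -
  interpret prob_space M by fact
  interpret mu: sigma_finite_measure mu by fact
  define N where "N = {x \<in> space (MV \<Otimes>\<^sub>M mu). P (fst x) (snd x) \<and> fV (snd x) (fst x) = 0}"
  have fV: "(\<lambda>x. fV (snd x) (fst x)) \<in> borel_measurable (MV \<Otimes>\<^sub>M mu)"
  proof -
    have "(\<lambda>(a, v). fV a v) \<in> borel_measurable (mu \<Otimes>\<^sub>M MV)"
      using dens_V unfolding cond_density_def by auto
    from measurable_compose[OF measurable_pair_swap' this] show ?thesis by (simp add: split_beta)
  qed
  have N: "N \<in> sets (MV \<Otimes>\<^sub>M mu)"
  proof -
    have "{x \<in> space (MV \<Otimes>\<^sub>M mu). fV (snd x) (fst x) = 0} \<in> sets (MV \<Otimes>\<^sub>M mu)"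
      using fV by measurable
    moreover have "N = {x \<in> space (MV \<Otimes>\<^sub>M mu). P (fst x) (snd x)}
        \<inter> {x \<in> space (MV \<Otimes>\<^sub>M mu). fV (snd x) (fst x) = 0}"
      unfolding N_def by blast
    ultimately show ?thesis using P by simp
  qed
  have "emeasure (distr M (MV \<Otimes>\<^sub>M mu) (\<lambda>\<omega>. (V \<omega>, A \<omega>))) N
      = (\<integral>\<^sup>+ \<omega>. \<integral>\<^sup>+ a. ennreal (fV a (V \<omega>)) * indicator N (V \<omega>, a) \<partial>mu \<partial>M)"
    unfolding distr_pair_eq_cond_density_mixture_self[OF prob sf A V dens_V]
    by (rule emeasure_cond_density_mixture[OF sf V V dens_V N])
  also have "\<dots> = (\<integral>\<^sup>+ \<omega>. \<integral>\<^sup>+ a. 0 \<partial>mu \<partial>M)"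
    by (intro nn_integral_cong) (auto simp: N_def indicator_def)
  finally have "(\<integral>\<^sup>+ \<omega>. \<integral>\<^sup>+ a. ennreal (fU a (U \<omega>)) * indicator N (V \<omega>, a) \<partial>mu \<partial>M) = 0"
    unfolding law_U emeasure_cond_density_mixture[OF sf U V dens_U N] by simp
  moreover have integrand: "(\<lambda>(\<omega>, a). ennreal (fU a (U \<omega>)) * indicator N (V \<omega>, a)) \<in> borel_measurable (M \<Otimes>\<^sub>M mu)"
    using cond_density_measurable[OF dens_U U] V N by measurable
  ultimately have "AE \<omega> in M. (\<integral>\<^sup>+ a. ennreal (fU a (U \<omega>)) * indicator N (V \<omega>, a) \<partial>mu) = 0"
    by (subst (asm) nn_integral_0_iff_AE) (use mu.borel_measurable_nn_integral[OF integrand] in simp_all)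
  then show ?thesis
    using AE_space
  proof eventually_elim
    case (elim \<omega>)
    have "(\<lambda>a. ennreal (fU a (U \<omega>)) * indicator N (V \<omega>, a)) \<in> borel_measurable mu"
      using measurable_Pair2[OF integrand elim(2)] by simp
    with elim(1) have "AE a in mu. ennreal (fU a (U \<omega>)) * indicator N (V \<omega>, a) = 0"
      by (simp add: nn_integral_0_iff_AE)
    then show ?case
    proof (rule AE_mp[OF _ AE_I2[OF impI]])
      fix a assume a: "a \<in> space mu" and zero: "ennreal (fU a (U \<omega>)) * indicator N (V \<omega>, a) = 0"
      show "P (V \<omega>) a \<longrightarrow> fV a (V \<omega>) \<noteq> 0"
      proof (intro impI notI)
        assume "P (V \<omega>) a" "fV a (V \<omega>) = 0"
        then have "(V \<omega>, a) \<in> N"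
          using a measurable_space[OF V elim(2)] by (simp add: N_def space_pair_measure)
        with zero have "fU a (U \<omega>) \<le> 0" by (simp add: ennreal_eq_0_iff)
        moreover have "0 \<le> fU a (U \<omega>)"
          using dens_U a measurable_space[OF U elim(2)] unfolding cond_density_def by auto
        ultimately show False using positive elim(2) a \<open>P (V \<omega>) a\<close> by auto
      qed
    qed
  qed
qed

section \<open>Positivity of the observed action density and the operator T\<close>

lemma integral_mult_cond_indep:
  fixes S :: "'o \<Rightarrow> 's" and T :: "'o \<Rightarrow> 't" and G :: "'o \<Rightarrow> 'g"
  assumes prob: "prob_space M"
    and S: "S \<in> measurable M NS" and T: "T \<in> measurable M NT" and G: "G \<in> measurable M NG"
    and indep: "cond_indep M S NS T NT G NG"
    and B: "B \<in> sets NS" and C: "C \<in> sets NT"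
    and g: "g \<in> borel_measurable NG" "\<And>y. \<bar>g y\<bar> \<le> 1"
  shows "(\<integral>\<omega>. g (G \<omega>) * indicator B (S \<omega>) * indicator C (T \<omega>) \<partial>M)
       = (\<integral>\<omega>. g (G \<omega>) * real_cond_exp M (sigma_gen M G NG) (\<lambda>\<omega>. indicator B (S \<omega>)) \<omega>
                * indicator C (T \<omega>) \<partial>M)"
proof -
  interpret prob_space M by fact
  define F where "F = sigma_gen M G NG"
  interpret sigma_finite_subalgebra M F
    unfolding F_def using sigma_finite_subalgebra_sigma_gen prob G by blast
  define iB where "iB \<omega> = (indicator B (S \<omega>) :: real)" for \<omega>
  define iC where "iC \<omega> = (indicator C (T \<omega>) :: real)" for \<omega>
  define ce where "ce = real_cond_exp M F iB"
  have "iB \<in> borel_measurable M" unfolding iB_def using S B by measurable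
  moreover have "\<bar>iB \<omega>\<bar> \<le> 1" for \<omega> unfolding iB_def by (simp add: indicator_def)
  ultimately have iB: "iB \<in> borel_measurable M" "\<And>\<omega>. \<bar>iB \<omega>\<bar> \<le> 1" by blast+
  have "iC \<in> borel_measurable M" unfolding iC_def using T C by measurable
  moreover have "\<bar>iC \<omega>\<bar> \<le> 1" for \<omega> unfolding iC_def by (simp add: indicator_def)
  ultimately have iC: "iC \<in> borel_measurable M" "\<And>\<omega>. \<bar>iC \<omega>\<bar> \<le> 1" by blast+
  have gG: "(\<lambda>\<omega>. g (G \<omega>)) \<in> borel_measurable F" "(\<lambda>\<omega>. g (G \<omega>)) \<in> borel_measurable M"
    unfolding F_def using measurable_sigma_gen_comp[OF G g(1)] measurable_compose[OF G g(1)] by auto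
  have ce: "integrable M ce" "ce \<in> borel_measurable F"
    unfolding ce_def using integrable_bounded_by_one[OF iB] by auto
  have factor: "AE \<omega> in M. real_cond_exp M F (\<lambda>\<omega>. iB \<omega> * iC \<omega>) \<omega> = ce \<omega> * real_cond_exp M F iC \<omega>"
    using indep B C unfolding cond_indep_def F_def[symmetric] ce_def iB_def iC_def by blast
  have gce: "integrable M (\<lambda>\<omega>. g (G \<omega>) * ce \<omega>)"
    by (rule integrable_mult_bounded_by_one[OF ce(1) gG(2) g(2)])
  have "(\<integral>\<omega>. g (G \<omega>) * (iB \<omega> * iC \<omega>) \<partial>M)
      = (\<integral>\<omega>. g (G \<omega>) * real_cond_exp M F (\<lambda>\<omega>. iB \<omega> * iC \<omega>) \<omega> \<partial>M)"
    using iB iC gG g(2) by (intro real_cond_exp_intg(2)[symmetric] integrable_bounded_by_one)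
      (auto simp: abs_mult intro!: mult_le_one)
  also have "\<dots> = (\<integral>\<omega>. (g (G \<omega>) * ce \<omega>) * real_cond_exp M F iC \<omega> \<partial>M)"
    by (rule integral_cong_AE) (use factor gG ce in \<open>auto simp: ac_simps\<close>)
  also have "\<dots> = (\<integral>\<omega>. (g (G \<omega>) * ce \<omega>) * iC \<omega> \<partial>M)"
    using gce iC gG ce
    by (intro real_cond_exp_intg(2)) (auto simp: mult.commute[of _ "iC _"]
        intro: integrable_mult_bounded_by_one)
  finally show ?thesis
    unfolding iB_def iC_def ce_def F_def by (simp add: ac_simps)
qed

lemma (in prob_space) integral_indicator_pair_mult_eq_of_rectangles:
  fixes g1 g2 :: "'a \<Rightarrow> real"
  assumes W: "W \<in> measurable M MW" and X: "X \<in> measurable M MX"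
    and g1: "integrable M g1" "AE \<omega> in M. 0 \<le> g1 \<omega>"
    and g2: "integrable M g2" "AE \<omega> in M. 0 \<le> g2 \<omega>"
    and rect: "\<And>C1 C2. C1 \<in> sets MW \<Longrightarrow> C2 \<in> sets MX \<Longrightarrow>
       (\<integral>\<omega>. indicator (C1 \<times> C2) (W \<omega>, X \<omega>) * g1 \<omega> \<partial>M)
       = (\<integral>\<omega>. indicator (C1 \<times> C2) (W \<omega>, X \<omega>) * g2 \<omega> \<partial>M)"
    and C: "C \<in> sets (MW \<Otimes>\<^sub>M MX)"
  shows "(\<integral>\<omega>. indicator C (W \<omega>, X \<omega>) * g1 \<omega> \<partial>M) = (\<integral>\<omega>. indicator C (W \<omega>, X \<omega>) * g2 \<omega> \<partial>M)"
proof -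
  have WX: "(\<lambda>\<omega>. (W \<omega>, X \<omega>)) \<in> measurable M (MW \<Otimes>\<^sub>M MX)" using W X by measurable
  have "distr (density M (\<lambda>\<omega>. ennreal (g1 \<omega>))) (MW \<Otimes>\<^sub>M MX) (\<lambda>\<omega>. (W \<omega>, X \<omega>))
      = distr (density M (\<lambda>\<omega>. ennreal (g2 \<omega>))) (MW \<Otimes>\<^sub>M MX) (\<lambda>\<omega>. (W \<omega>, X \<omega>))"
  proof (rule measure_eq_on_rectangles)
    show "emeasure (distr (density M (\<lambda>\<omega>. ennreal (g1 \<omega>))) (MW \<Otimes>\<^sub>M MX) (\<lambda>\<omega>. (W \<omega>, X \<omega>)))
        (space MW \<times> space MX) \<noteq> \<infinity>"
      using emeasure_distr_density_eq_integral[OF WX g1, of "space MW \<times> space MX"] by simp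
  qed (use emeasure_distr_density_eq_integral[OF WX g1] emeasure_distr_density_eq_integral[OF WX g2]
        rect in simp_all)
  then have "ennreal (\<integral>\<omega>. indicator C (W \<omega>, X \<omega>) * g1 \<omega> \<partial>M)
      = ennreal (\<integral>\<omega>. indicator C (W \<omega>, X \<omega>) * g2 \<omega> \<partial>M)"
    using emeasure_distr_density_eq_integral[OF WX g1 C]
      emeasure_distr_density_eq_integral[OF WX g2 C] by simp
  moreover have "0 \<le> (\<integral>\<omega>. indicator C (W \<omega>, X \<omega>) * g1 \<omega> \<partial>M)"
    by (rule integral_nonneg_AE) (use g1(2) in auto)
  moreover have "0 \<le> (\<integral>\<omega>. indicator C (W \<omega>, X \<omega>) * g2 \<omega> \<partial>M)"
    by (rule integral_nonneg_AE) (use g2(2) in auto)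
  ultimately show ?thesis by simp
qed

lemma integral_indicator_mult_eq_cond_exp_of_cond_indep:
  fixes A :: "'o \<Rightarrow> 'a" and Yv :: "'o \<Rightarrow> real"
  assumes prob: "prob_space M"
    and A: "A \<in> measurable M mu" and U: "U \<in> measurable M MU" and X: "X \<in> measurable M MX"
    and W: "W \<in> measurable M MW" and Z: "Z \<in> measurable M MZ" and Yv: "Yv \<in> borel_measurable M"
    and indep: "cond_indep M (\<lambda>\<omega>. (Z \<omega>, A \<omega>)) (MZ \<Otimes>\<^sub>M mu) (\<lambda>\<omega>. (Yv \<omega>, W \<omega>)) (borel \<Otimes>\<^sub>M MW)
                  (\<lambda>\<omega>. (U \<omega>, X \<omega>)) (MU \<Otimes>\<^sub>M MX)"
    and B: "B \<in> sets mu" and C: "C \<in> sets (MW \<Otimes>\<^sub>M MX)"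
  shows "(\<integral>\<omega>. indicator C (W \<omega>, X \<omega>) * indicator B (A \<omega>) \<partial>M)
     = (\<integral>\<omega>. indicator C (W \<omega>, X \<omega>) *
          real_cond_exp M (sigma_gen M (\<lambda>\<omega>. (U \<omega>, X \<omega>)) (MU \<Otimes>\<^sub>M MX)) (\<lambda>\<omega>. indicator B (A \<omega>)) \<omega> \<partial>M)"
proof -
  interpret prob_space M by fact
  define F where "F = sigma_gen M (\<lambda>\<omega>. (U \<omega>, X \<omega>)) (MU \<Otimes>\<^sub>M MX)"
  have UX: "(\<lambda>\<omega>. (U \<omega>, X \<omega>)) \<in> measurable M (MU \<Otimes>\<^sub>M MX)" using U X by measurable
  interpret sigma_finite_subalgebra M F
    unfolding F_def using sigma_finite_subalgebra_sigma_gen prob UX by blast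
  define iB where "iB \<omega> = (indicator B (A \<omega>) :: real)" for \<omega>
  define ce where "ce = real_cond_exp M F iB"
  have iB: "iB \<in> borel_measurable M" unfolding iB_def using A B by measurable
  have iB_int: "integrable M iB"
    by (rule integrable_bounded_by_one[OF iB]) (simp add: iB_def indicator_def)
  have ce: "integrable M ce" "AE \<omega> in M. 0 \<le> ce \<omega>"
    unfolding ce_def using iB_int iB by (auto simp: iB_def intro!: real_cond_exp_pos)
  have "(\<integral>\<omega>. indicator C (W \<omega>, X \<omega>) * iB \<omega> \<partial>M) = (\<integral>\<omega>. indicator C (W \<omega>, X \<omega>) * ce \<omega> \<partial>M)"
  proof (rule integral_indicator_pair_mult_eq_of_rectangles[OF W X iB_int _ ce _ C])
    fix C1 C2 assume C1: "C1 \<in> sets MW" and C2: "C2 \<in> sets MX"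
    have "(\<integral>\<omega>. indicator (C1 \<times> C2) (W \<omega>, X \<omega>) * iB \<omega> \<partial>M)
        = (\<integral>\<omega>. indicator C2 (snd (U \<omega>, X \<omega>)) * indicator (space MZ \<times> B) (Z \<omega>, A \<omega>)
                * indicator (UNIV \<times> C1) (Yv \<omega>, W \<omega>) \<partial>M)"
      using measurable_space[OF Z]
      by (intro Bochner_Integration.integral_cong) (auto simp: iB_def indicator_def)
    also have "\<dots> = (\<integral>\<omega>. indicator C2 (snd (U \<omega>, X \<omega>))
          * real_cond_exp M F (\<lambda>\<omega>. indicator (space MZ \<times> B) (Z \<omega>, A \<omega>)) \<omega>
          * indicator (UNIV \<times> C1) (Yv \<omega>, W \<omega>) \<partial>M)"
    proof -
      have "(\<lambda>\<omega>. (Z \<omega>, A \<omega>)) \<in> measurable M (MZ \<Otimes>\<^sub>M mu)"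
        and "(\<lambda>\<omega>. (Yv \<omega>, W \<omega>)) \<in> measurable M (borel \<Otimes>\<^sub>M MW)"
        and "(\<lambda>y. indicator C2 (snd y) :: real) \<in> borel_measurable (MU \<Otimes>\<^sub>M MX)"
        using Z A Yv W C2 by measurable
      moreover have "space MZ \<times> B \<in> sets (MZ \<Otimes>\<^sub>M mu)" "UNIV \<times> C1 \<in> sets (borel \<Otimes>\<^sub>M MW)"
        using B C1 by auto
      ultimately show ?thesis
        unfolding F_def by (intro integral_mult_cond_indep[OF prob _ _ UX indep]) (auto simp: indicator_def)
    qed
    also have "\<dots> = (\<integral>\<omega>. indicator (C1 \<times> C2) (W \<omega>, X \<omega>) * ce \<omega> \<partial>M)"
    proof (rule integral_cong_AE)
      have "AE \<omega> in M. real_cond_exp M F (\<lambda>\<omega>. indicator (space MZ \<times> B) (Z \<omega>, A \<omega>)) \<omega> = ce \<omega>"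
        unfolding ce_def using measurable_space[OF Z] iB Z A B
        by (intro real_cond_exp_cong) (auto simp: iB_def indicator_def)
      then show "AE \<omega> in M. indicator C2 (snd (U \<omega>, X \<omega>))
          * real_cond_exp M F (\<lambda>\<omega>. indicator (space MZ \<times> B) (Z \<omega>, A \<omega>)) \<omega>
          * indicator (UNIV \<times> C1) (Yv \<omega>, W \<omega>) = indicator (C1 \<times> C2) (W \<omega>, X \<omega>) * ce \<omega>"
      proof eventually_elim
        case (elim \<omega>)
        have "indicator C2 (snd (U \<omega>, X \<omega>)) * r \<omega> * indicator (UNIV \<times> C1) (Yv \<omega>, W \<omega>)
            = indicator (C1 \<times> C2) (W \<omega>, X \<omega>) * r \<omega>" for r :: "'o \<Rightarrow> real"
          by (auto simp: indicator_def)
        then show ?case using elim by metis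
      qed
      show "(\<lambda>\<omega>. indicator (C1 \<times> C2) (W \<omega>, X \<omega>) * ce \<omega>) \<in> borel_measurable M"
        unfolding ce_def using W X C1 C2 by measurable
      show "(\<lambda>\<omega>. indicator C2 (snd (U \<omega>, X \<omega>))
          * real_cond_exp M F (\<lambda>\<omega>. indicator (space MZ \<times> B) (Z \<omega>, A \<omega>)) \<omega>
          * indicator (UNIV \<times> C1) (Yv \<omega>, W \<omega>) :: real) \<in> borel_measurable M"
        using borel_measurable_cond_exp2 U X Yv W C1 C2 by measurable
    qed
    finally show "(\<integral>\<omega>. indicator (C1 \<times> C2) (W \<omega>, X \<omega>) * iB \<omega> \<partial>M)
        = (\<integral>\<omega>. indicator (C1 \<times> C2) (W \<omega>, X \<omega>) * ce \<omega> \<partial>M)" .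
  qed (auto simp: iB_def)
  then show ?thesis unfolding iB_def ce_def F_def .
qed

lemma AE_cond_density_nonzero_of_cond_indep:
  fixes A :: "'o \<Rightarrow> 'a" and Yv :: "'o \<Rightarrow> real" and ppi :: "'a \<Rightarrow> 'x \<Rightarrow> real"
  assumes prob: "prob_space M" and sf: "sigma_finite_measure mu"
    and U: "U \<in> measurable M MU" and X: "X \<in> measurable M MX" and A: "A \<in> measurable M mu"
    and Z: "Z \<in> measurable M MZ" and W: "W \<in> measurable M MW" and Yv: "Yv \<in> borel_measurable M"
    and pi: "(\<lambda>(a, x). ppi a x) \<in> borel_measurable (mu \<Otimes>\<^sub>M MX)"
    and dens_U: "cond_density M mu A (\<lambda>\<omega>. (U \<omega>, X \<omega>)) (MU \<Otimes>\<^sub>M MX) fU"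
    and dens_W: "cond_density M mu A (\<lambda>\<omega>. (W \<omega>, X \<omega>)) (MW \<Otimes>\<^sub>M MX) fW"
    and indep: "cond_indep M (\<lambda>\<omega>. (Z \<omega>, A \<omega>)) (MZ \<Otimes>\<^sub>M mu) (\<lambda>\<omega>. (Yv \<omega>, W \<omega>)) (borel \<Otimes>\<^sub>M MW)
                  (\<lambda>\<omega>. (U \<omega>, X \<omega>)) (MU \<Otimes>\<^sub>M MX)"
    and positive: "\<forall>a\<in>space mu. \<forall>x\<in>space MX. \<forall>u\<in>space MU. ppi a x \<noteq> 0 \<longrightarrow> fU a (u, x) \<noteq> 0"
  shows "AE \<omega> in M. AE a in mu. ppi a (X \<omega>) \<noteq> 0 \<longrightarrow> fW a (W \<omega>, X \<omega>) \<noteq> 0"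
proof -
  have UX: "(\<lambda>\<omega>. (U \<omega>, X \<omega>)) \<in> measurable M (MU \<Otimes>\<^sub>M MX)" using U X by measurable
  have WX: "(\<lambda>\<omega>. (W \<omega>, X \<omega>)) \<in> measurable M (MW \<Otimes>\<^sub>M MX)" using W X by measurable
  have law: "distr M ((MW \<Otimes>\<^sub>M MX) \<Otimes>\<^sub>M mu) (\<lambda>\<omega>. ((W \<omega>, X \<omega>), A \<omega>))
      = cond_density_mixture M mu (MW \<Otimes>\<^sub>M MX) (\<lambda>\<omega>. (W \<omega>, X \<omega>)) (\<lambda>\<omega>. (U \<omega>, X \<omega>)) fU"
    by (rule distr_pair_eq_cond_density_mixture[OF prob sf A UX WX dens_U])
      (rule integral_indicator_mult_eq_cond_exp_of_cond_indep[OF prob A U X W Z Yv indep])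
  have "{x \<in> space ((MW \<Otimes>\<^sub>M MX) \<Otimes>\<^sub>M mu). ppi (snd x) (snd (fst x)) \<noteq> 0}
      \<in> sets ((MW \<Otimes>\<^sub>M MX) \<Otimes>\<^sub>M mu)"
  proof -
    have "(\<lambda>x. (\<lambda>(a, x). ppi a x) (snd x, snd (fst x))) \<in> borel_measurable ((MW \<Otimes>\<^sub>M MX) \<Otimes>\<^sub>M mu)"
      by (rule measurable_compose[OF _ pi]) measurable
    then have "(\<lambda>x. ppi (snd x) (snd (fst x))) \<in> borel_measurable ((MW \<Otimes>\<^sub>M MX) \<Otimes>\<^sub>M mu)"
      by simp
    from measurable_sets[OF this borel_open[OF open_Compl[OF closed_singleton]]]
    have "(\<lambda>x. ppi (snd x) (snd (fst x))) -` (- {0}) \<inter> space ((MW \<Otimes>\<^sub>M MX) \<Otimes>\<^sub>M mu)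
        \<in> sets ((MW \<Otimes>\<^sub>M MX) \<Otimes>\<^sub>M mu)" .
    moreover have "(\<lambda>x. ppi (snd x) (snd (fst x))) -` (- {0}) \<inter> space ((MW \<Otimes>\<^sub>M MX) \<Otimes>\<^sub>M mu)
        = {x \<in> space ((MW \<Otimes>\<^sub>M MX) \<Otimes>\<^sub>M mu). ppi (snd x) (snd (fst x)) \<noteq> 0}"
      by blast
    ultimately show ?thesis by simp
  qed
  moreover have "\<forall>\<omega>\<in>space M. \<forall>a\<in>space mu. ppi a (X \<omega>) \<noteq> 0 \<longrightarrow> fU a (U \<omega>, X \<omega>) \<noteq> 0"
    using positive measurable_space[OF U] measurable_space[OF X] by blast
  ultimately show ?thesis
    using AE_cond_density_nonzero_transfer[where P="\<lambda>v a. ppi a (snd v) \<noteq> 0",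
        OF prob sf A UX WX dens_U dens_W law]
    by simp
qed

lemma measurable_Top_integrand:
  fixes h :: "'w \<times> 'a \<times> 'x \<Rightarrow> real" and ppi :: "'a \<Rightarrow> 'x \<Rightarrow> real"
  assumes X: "X \<in> measurable M MX" and W: "W \<in> measurable M MW"
    and pi: "(\<lambda>(a, x). ppi a x) \<in> borel_measurable (mu \<Otimes>\<^sub>M MX)"
    and h: "h \<in> borel_measurable (MW \<Otimes>\<^sub>M mu \<Otimes>\<^sub>M MX)"
  shows "(\<lambda>(\<omega>, a). h (W \<omega>, a, X \<omega>) * ppi a (X \<omega>)) \<in> borel_measurable (M \<Otimes>\<^sub>M mu)"
proof -
  have "(\<lambda>y. h (W (fst y), snd y, X (fst y))) \<in> borel_measurable (M \<Otimes>\<^sub>M mu)"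
    by (rule measurable_compose[OF _ h]) (use W X in measurable)
  moreover have "(\<lambda>y. (\<lambda>(a, x). ppi a x) (snd y, X (fst y))) \<in> borel_measurable (M \<Otimes>\<^sub>M mu)"
    by (rule measurable_compose[OF _ pi]) (use X in measurable)
  ultimately show ?thesis by (simp add: split_beta')
qed

lemma integral_inverse_density_weight_eq_integral_Top:
  fixes A :: "'o \<Rightarrow> 'a" and h :: "'w \<times> 'a \<times> 'x \<Rightarrow> real" and ppi :: "'a \<Rightarrow> 'x \<Rightarrow> real"
  assumes prob: "prob_space M" and sf: "sigma_finite_measure mu"
    and X: "X \<in> measurable M MX" and A: "A \<in> measurable M mu" and W: "W \<in> measurable M MW"
    and pi: "(\<lambda>(a, x). ppi a x) \<in> borel_measurable (mu \<Otimes>\<^sub>M MX)"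
    and dens_W: "cond_density M mu A (\<lambda>\<omega>. (W \<omega>, X \<omega>)) (MW \<Otimes>\<^sub>M MX) fW"
    and positive: "AE \<omega> in M. AE a in mu. ppi a (X \<omega>) \<noteq> 0 \<longrightarrow> fW a (W \<omega>, X \<omega>) \<noteq> 0"
    and h: "h \<in> borel_measurable (MW \<Otimes>\<^sub>M mu \<Otimes>\<^sub>M MX)"
    and integrable_h: "integrable M (\<lambda>\<omega>. h (W \<omega>, A \<omega>, X \<omega>) * (ppi (A \<omega>) (X \<omega>) / fW (A \<omega>) (W \<omega>, X \<omega>)))"
  shows "integrable M (\<lambda>\<omega>. Top mu ppi h (W \<omega>) (X \<omega>))"
    and "(\<integral>\<omega>. h (W \<omega>, A \<omega>, X \<omega>) * (ppi (A \<omega>) (X \<omega>) / fW (A \<omega>) (W \<omega>, X \<omega>)) \<partial>M)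
         = (\<integral>\<omega>. Top mu ppi h (W \<omega>) (X \<omega>) \<partial>M)"
proof -
  interpret prob_space M by fact
  interpret mu: sigma_finite_measure mu by fact
  define G where "G v a = h (fst v, a, snd v) * (ppi a (snd v) / fW a v)" for v a
  have WX: "(\<lambda>\<omega>. (W \<omega>, X \<omega>)) \<in> measurable M (MW \<Otimes>\<^sub>M MX)" using W X by measurable
  have fW: "(\<lambda>(a, v). fW a v) \<in> borel_measurable (mu \<Otimes>\<^sub>M (MW \<Otimes>\<^sub>M MX))"
    using dens_W unfolding cond_density_def by auto
  have "(\<lambda>y. h (fst (fst y), snd y, snd (fst y))) \<in> borel_measurable ((MW \<Otimes>\<^sub>M MX) \<Otimes>\<^sub>M mu)"
    by (rule measurable_compose[OF _ h]) measurable
  moreover have "(\<lambda>y. (\<lambda>(a, x). ppi a x) (snd y, snd (fst y))) \<in> borel_measurable ((MW \<Otimes>\<^sub>M MX) \<Otimes>\<^sub>M mu)"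
    by (rule measurable_compose[OF _ pi]) measurable
  moreover have "(\<lambda>y. (\<lambda>(a, v). fW a v) (snd y, fst y)) \<in> borel_measurable ((MW \<Otimes>\<^sub>M MX) \<Otimes>\<^sub>M mu)"
    by (rule measurable_compose[OF _ fW]) measurable
  ultimately have G: "(\<lambda>(v, a). G v a) \<in> borel_measurable ((MW \<Otimes>\<^sub>M MX) \<Otimes>\<^sub>M mu)"
    unfolding G_def split_beta' by simp
  have fG: "(\<lambda>(v, a). fW a v * G v a) \<in> borel_measurable ((MW \<Otimes>\<^sub>M MX) \<Otimes>\<^sub>M mu)"
    using G measurable_compose[OF measurable_pair_swap' fW] by (simp add: split_beta')
  note hpi = measurable_Top_integrand[OF X W pi h]
  have Top: "(\<lambda>\<omega>. Top mu ppi h (W \<omega>) (X \<omega>)) \<in> borel_measurable M"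
    unfolding Top_def by (rule mu.borel_measurable_lebesgue_integral[OF hpi])
  note by_density = integral_cond_density[OF prob sf A WX dens_W G]
  have inner: "AE \<omega> in M. (\<integral>a. fW a (W \<omega>, X \<omega>) * G (W \<omega>, X \<omega>) a \<partial>mu) = Top mu ppi h (W \<omega>) (X \<omega>)"
    using positive AE_space
  proof eventually_elim
    case (elim \<omega>)
    show ?case
      unfolding Top_def
    proof (rule integral_cong_AE)
      show "AE a in mu. fW a (W \<omega>, X \<omega>) * G (W \<omega>, X \<omega>) a = h (W \<omega>, a, X \<omega>) * ppi a (X \<omega>)"
        using elim(1) by eventually_elim (auto simp: G_def)
      show "(\<lambda>a. fW a (W \<omega>, X \<omega>) * G (W \<omega>, X \<omega>) a) \<in> borel_measurable mu"
        using measurable_Pair2[OF fG measurable_space[OF WX elim(2)]] by simp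
      show "(\<lambda>a. h (W \<omega>, a, X \<omega>) * ppi a (X \<omega>)) \<in> borel_measurable mu"
        using measurable_Pair2[OF hpi elim(2)] by simp
    qed
  qed
  show "integrable M (\<lambda>\<omega>. Top mu ppi h (W \<omega>) (X \<omega>))"
    by (rule integrable_cong_AE_imp[OF by_density(1) Top inner]) (use integrable_h in \<open>simp add: G_def\<close>)
  have "(\<integral>\<omega>. h (W \<omega>, A \<omega>, X \<omega>) * (ppi (A \<omega>) (X \<omega>) / fW (A \<omega>) (W \<omega>, X \<omega>)) \<partial>M)
      = (\<integral>\<omega>. \<integral>a. fW a (W \<omega>, X \<omega>) * G (W \<omega>, X \<omega>) a \<partial>mu \<partial>M)"
    using by_density(2) integrable_h by (simp add: G_def)
  also have "\<dots> = (\<integral>\<omega>. Top mu ppi h (W \<omega>) (X \<omega>) \<partial>M)"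
    by (rule integral_cong_AE[OF _ Top inner]) (use by_density(1) integrable_h in \<open>simp add: G_def\<close>)
  finally show "(\<integral>\<omega>. h (W \<omega>, A \<omega>, X \<omega>) * (ppi (A \<omega>) (X \<omega>) / fW (A \<omega>) (W \<omega>, X \<omega>)) \<partial>M)
      = (\<integral>\<omega>. Top mu ppi h (W \<omega>) (X \<omega>) \<partial>M)" .
qed

lemma integral_action_bridge_mult_eq_integral_Top:
  fixes A :: "'o \<Rightarrow> 'a" and Yv :: "'o \<Rightarrow> real" and ppi :: "'a \<Rightarrow> 'x \<Rightarrow> real"
    and h :: "'w \<times> 'a \<times> 'x \<Rightarrow> real"
  assumes prob: "prob_space M" and sf: "sigma_finite_measure mu"
    and U: "U \<in> measurable M MU" and X: "X \<in> measurable M MX" and A: "A \<in> measurable M mu"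
    and Z: "Z \<in> measurable M MZ" and W: "W \<in> measurable M MW" and Yv: "Yv \<in> borel_measurable M"
    and pi: "(\<lambda>(a, x). ppi a x) \<in> borel_measurable (mu \<Otimes>\<^sub>M MX)"
    and dens_U: "cond_density M mu A (\<lambda>\<omega>. (U \<omega>, X \<omega>)) (MU \<Otimes>\<^sub>M MX) fU"
    and dens_W: "cond_density M mu A (\<lambda>\<omega>. (W \<omega>, X \<omega>)) (MW \<Otimes>\<^sub>M MX) fW"
    and indep: "cond_indep M (\<lambda>\<omega>. (Z \<omega>, A \<omega>)) (MZ \<Otimes>\<^sub>M mu) (\<lambda>\<omega>. (Yv \<omega>, W \<omega>)) (borel \<Otimes>\<^sub>M MW)
                  (\<lambda>\<omega>. (U \<omega>, X \<omega>)) (MU \<Otimes>\<^sub>M MX)"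
    and positive: "\<forall>a\<in>space mu. \<forall>x\<in>space MX. \<forall>u\<in>space MU. ppi a x \<noteq> 0 \<longrightarrow> fU a (u, x) \<noteq> 0"
    and q0: "q0 \<in> action_bridges M ppi Z A X (MZ \<Otimes>\<^sub>M mu \<Otimes>\<^sub>M MX) (\<lambda>\<omega>. 1 / fW (A \<omega>) (W \<omega>, X \<omega>))
                 (\<lambda>\<omega>. (W \<omega>, A \<omega>, X \<omega>)) (MW \<Otimes>\<^sub>M mu \<Otimes>\<^sub>M MX)"
    and h: "L2rv M (\<lambda>\<omega>. (W \<omega>, A \<omega>, X \<omega>)) (MW \<Otimes>\<^sub>M mu \<Otimes>\<^sub>M MX) h"
  shows "integrable M (\<lambda>\<omega>. Top mu ppi h (W \<omega>) (X \<omega>)) \<and>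
     (\<integral>\<omega>. ppi (A \<omega>) (X \<omega>) * q0 (Z \<omega>, A \<omega>, X \<omega>) * h (W \<omega>, A \<omega>, X \<omega>) \<partial>M)
       = (\<integral>\<omega>. Top mu ppi h (W \<omega>) (X \<omega>) \<partial>M)"
proof -
  define WAX where "WAX \<omega> = (W \<omega>, A \<omega>, X \<omega>)" for \<omega>
  define R where "R = (\<lambda>(w, a, x). ppi a x / fW a (w, x))"
  have WAX: "WAX \<in> measurable M (MW \<Otimes>\<^sub>M mu \<Otimes>\<^sub>M MX)" unfolding WAX_def using W A X by measurable
  have ZAX: "(\<lambda>\<omega>. (Z \<omega>, A \<omega>, X \<omega>)) \<in> measurable M (MZ \<Otimes>\<^sub>M mu \<Otimes>\<^sub>M MX)" using Z A X by measurable
  have "(\<lambda>y. (\<lambda>(a, x). ppi a x) (fst (snd y), snd (snd y))) \<in> borel_measurable (MW \<Otimes>\<^sub>M mu \<Otimes>\<^sub>M MX)"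
    by (rule measurable_compose[OF _ pi]) measurable
  moreover have "(\<lambda>(a, v). fW a v) \<in> borel_measurable (mu \<Otimes>\<^sub>M (MW \<Otimes>\<^sub>M MX))"
    using dens_W unfolding cond_density_def by blast
  then have "(\<lambda>y. (\<lambda>(a, v). fW a v) (fst (snd y), (fst y, snd (snd y))))
      \<in> borel_measurable (MW \<Otimes>\<^sub>M mu \<Otimes>\<^sub>M MX)"
    by (rule measurable_compose[rotated]) measurable
  ultimately have R: "R \<in> borel_measurable (MW \<Otimes>\<^sub>M mu \<Otimes>\<^sub>M MX)"
    unfolding R_def by (simp add: split_beta')
  have q0_L2: "(\<lambda>\<omega>. ppi (A \<omega>) (X \<omega>) * q0 (Z \<omega>, A \<omega>, X \<omega>)) \<in> borel_measurable M"
    "integrable M (\<lambda>\<omega>. (ppi (A \<omega>) (X \<omega>) * q0 (Z \<omega>, A \<omega>, X \<omega>))\<^sup>2)"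
    using L2rv_comp[OF _ ZAX, of "\<lambda>(z, a, x). ppi a x * q0 (z, a, x)"] q0
    unfolding action_bridges_def by simp_all
  have "cexp_zero M WAX (MW \<Otimes>\<^sub>M mu \<Otimes>\<^sub>M MX)
      (\<lambda>\<omega>. ppi (A \<omega>) (X \<omega>) * q0 (Z \<omega>, A \<omega>, X \<omega>) - R (WAX \<omega>))"
    using q0 unfolding action_bridges_def WAX_def R_def by (simp add: right_diff_distrib)
  note weighted = integral_mult_eq_of_cexp_zero[OF prob WAX q0_L2 R this]
  have h_L2: "h \<in> borel_measurable (MW \<Otimes>\<^sub>M mu \<Otimes>\<^sub>M MX)" "integrable M (\<lambda>\<omega>. (h (WAX \<omega>))\<^sup>2)"
    using h unfolding L2rv_def WAX_def by auto
  note positivity = AE_cond_density_nonzero_of_cond_indep[OF prob sf U X A Z W Yv pi dens_U dens_W indep positive]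
  note Top = integral_inverse_density_weight_eq_integral_Top[OF prob sf X A W pi dens_W positivity h_L2(1)]
  have "integrable M (\<lambda>\<omega>. h (W \<omega>, A \<omega>, X \<omega>) * (ppi (A \<omega>) (X \<omega>) / fW (A \<omega>) (W \<omega>, X \<omega>)))"
    using weighted(1)[OF h_L2] unfolding WAX_def R_def by simp
  moreover have "(\<lambda>\<omega>. ppi (A \<omega>) (X \<omega>) * q0 (Z \<omega>, A \<omega>, X \<omega>) * h (W \<omega>, A \<omega>, X \<omega>))
      = (\<lambda>\<omega>. h (WAX \<omega>) * (ppi (A \<omega>) (X \<omega>) * q0 (Z \<omega>, A \<omega>, X \<omega>)))"
    unfolding WAX_def by (simp add: mult.commute)
  ultimately show ?thesis
    using weighted(2)[OF h_L2] Top unfolding WAX_def R_def by simp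
qed

theorem mainTheorem6:
  fixes M :: "'o measure"
    and MU :: "'u measure" and MX :: "'x measure" and mu :: "'a measure"
    and MZ :: "'z measure" and MW :: "'w measure"
    and U :: "'o \<Rightarrow> 'u" and X :: "'o \<Rightarrow> 'x" and A :: "'o \<Rightarrow> 'a"
    and Z :: "'o \<Rightarrow> 'z" and W :: "'o \<Rightarrow> 'w" and Y :: "'o \<Rightarrow> real"
    and Ypo :: "'a \<Rightarrow> 'z \<Rightarrow> 'o \<Rightarrow> real" and Ya :: "'a \<Rightarrow> 'o \<Rightarrow> real"
    and Wpo :: "'a \<Rightarrow> 'z \<Rightarrow> 'o \<Rightarrow> 'w"
    and ppi :: "'a \<Rightarrow> 'x \<Rightarrow> real"
    and fU :: "'a \<Rightarrow> 'u \<times> 'x \<Rightarrow> real" and fW :: "'a \<Rightarrow> 'w \<times> 'x \<Rightarrow> real"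
    and H :: "('w \<times> 'a \<times> 'x \<Rightarrow> real) set" and H' :: "('w \<times> 'a \<times> 'x \<Rightarrow> real) set"
    and Q :: "('z \<times> 'a \<times> 'x \<Rightarrow> real) set" and Q' :: "('z \<times> 'a \<times> 'x \<Rightarrow> real) set"
  defines "WAX \<equiv> (\<lambda>\<omega>. (W \<omega>, A \<omega>, X \<omega>))" and "MWAX \<equiv> MW \<Otimes>\<^sub>M mu \<Otimes>\<^sub>M MX"
      and "ZAX \<equiv> (\<lambda>\<omega>. (Z \<omega>, A \<omega>, X \<omega>))" and "MZAX \<equiv> MZ \<Otimes>\<^sub>M mu \<Otimes>\<^sub>M MX"
      and "AUX \<equiv> (\<lambda>\<omega>. (A \<omega>, U \<omega>, X \<omega>))" and "MAUX \<equiv> mu \<Otimes>\<^sub>M MU \<Otimes>\<^sub>M MX"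
  assumes prob: "prob_space M"
    and sf: "sigma_finite_measure mu"
    and meas: "U \<in> measurable M MU" "X \<in> measurable M MX" "A \<in> measurable M mu"
              "Z \<in> measurable M MZ" "W \<in> measurable M MW" "Y \<in> borel_measurable M"
    and pi_meas: "(\<lambda>(a, x). ppi a x) \<in> borel_measurable (mu \<Otimes>\<^sub>M MX)"
    and dens_U: "cond_density M mu A (\<lambda>\<omega>. (U \<omega>, X \<omega>)) (MU \<Otimes>\<^sub>M MX) fU"
    and dens_W: "cond_density M mu A (\<lambda>\<omega>. (W \<omega>, X \<omega>)) (MW \<Otimes>\<^sub>M MX) fW"
    and Y_L2: "integrable M (\<lambda>\<omega>. (Y \<omega>)\<^sup>2)"
    \<comment> \<open>Assumption (NC)\<close>
    and NC_i: "\<forall>\<omega>\<in>space M. Y \<omega> = Ypo (A \<omega>) (Z \<omega>) \<omega> \<and> W \<omega> = Wpo (A \<omega>) (Z \<omega>) \<omega>"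
    and NC_ii: "\<forall>a\<in>space mu. \<forall>z\<in>space MZ. \<forall>\<omega>\<in>space M. Ypo a z \<omega> = Ya a \<omega>"
    and NC_iii: "\<forall>a\<in>space mu. \<forall>z\<in>space MZ. \<forall>\<omega>\<in>space M. Wpo a z \<omega> = W \<omega>"
    and NC_iv: "\<forall>a\<in>space mu. Ya a \<in> borel_measurable M \<and>
                  cond_indep M (\<lambda>\<omega>. (Z \<omega>, A \<omega>)) (MZ \<Otimes>\<^sub>M mu)
                    (\<lambda>\<omega>. (Ya a \<omega>, W \<omega>)) (borel \<Otimes>\<^sub>M MW) (\<lambda>\<omega>. (U \<omega>, X \<omega>)) (MU \<Otimes>\<^sub>M MX)"
    and NC_v: "\<forall>a\<in>space mu. \<forall>x\<in>space MX. \<forall>u\<in>space MU. ppi a x \<noteq> 0 \<longrightarrow> fU a (u, x) \<noteq> 0"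
    \<comment> \<open>Assumption (B)\<close>
    and B_H: "outcome_bridges M WAX MWAX Y AUX MAUX \<noteq> {}"
    and B_Q: "action_bridges M ppi Z A X MZAX (\<lambda>\<omega>. 1 / fU (A \<omega>) (U \<omega>, X \<omega>)) AUX MAUX \<noteq> {}"
    \<comment> \<open>function classes\<close>
    and H_L2: "\<forall>h\<in>H. L2rv M WAX MWAX h"
    and Q_L2: "\<forall>q\<in>Q. L2rv M ZAX MZAX (\<lambda>(z, a, x). ppi a x * q (z, a, x))"
    and H'_L2: "\<forall>h\<in>H'. L2rv M WAX MWAX h"
    and Q'_L2: "\<forall>q\<in>Q'. L2rv M ZAX MZAX q"
    \<comment> \<open>realizability\<close>
    and real_H: "outcome_bridges M WAX MWAX Y ZAX MZAX \<inter> H \<noteq> {}"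
    and real_Q: "action_bridges M ppi Z A X MZAX (\<lambda>\<omega>. 1 / fW (A \<omega>) (W \<omega>, X \<omega>)) WAX MWAX \<inter> Q \<noteq> {}"
    \<comment> \<open>closedness: P_z (H - H0obs) \<subseteq> Q' and ppi P_w (Q - Q0obs) \<subseteq> H'\<close>
    and closed_Q': "\<forall>h\<in>H. \<forall>h0\<in>outcome_bridges M WAX MWAX Y ZAX MZAX. \<exists>q\<in>Q'.
                     cexp_version M ZAX MZAX (\<lambda>\<omega>. h (WAX \<omega>) - h0 (WAX \<omega>)) q"
    and closed_H': "\<forall>q\<in>Q. \<forall>q0\<in>action_bridges M ppi Z A X MZAX (\<lambda>\<omega>. 1 / fW (A \<omega>) (W \<omega>, X \<omega>)) WAX MWAX.
                     \<exists>h\<in>H'. cexp_version M WAX MWAX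
                        (\<lambda>\<omega>. ppi (A \<omega>) (X \<omega>) * q (ZAX \<omega>) - ppi (A \<omega>) (X \<omega>) * q0 (ZAX \<omega>)) h"
  shows "outcome_bridges M WAX MWAX Y ZAX MZAX \<inter> H
           = argmin_on H (\<lambda>h. SUP q\<in>Q'. ereal ((\<integral>\<omega>. q (ZAX \<omega>) * (h (WAX \<omega>) - Y \<omega>) \<partial>M)\<^sup>2))
         \<and> action_bridges M ppi Z A X MZAX (\<lambda>\<omega>. 1 / fW (A \<omega>) (W \<omega>, X \<omega>)) WAX MWAX \<inter> Q
           = argmin_on Q (\<lambda>q. SUP h\<in>H'. ereal ((\<integral>\<omega>. ppi (A \<omega>) (X \<omega>) * q (ZAX \<omega>) * h (WAX \<omega>)
                                                  - Top mu ppi h (W \<omega>) (X \<omega>) \<partial>M)\<^sup>2))"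
proof -
  have WAX: "WAX \<in> measurable M MWAX" unfolding WAX_def MWAX_def using meas by measurable
  have ZAX: "ZAX \<in> measurable M MZAX" unfolding ZAX_def MZAX_def using meas by measurable
  obtain \<omega>0 where "\<omega>0 \<in> space M"
    using prob_space.not_empty[OF prob] by blast
  then have a0: "A \<omega>0 \<in> space mu" using measurable_space[OF meas(3)] by blast
  have "integrable M (\<lambda>\<omega>. Top mu ppi h (W \<omega>) (X \<omega>)) \<and>
      (\<integral>\<omega>. ppi (A \<omega>) (X \<omega>) * q0 (ZAX \<omega>) * h (WAX \<omega>) \<partial>M) = (\<integral>\<omega>. Top mu ppi h (W \<omega>) (X \<omega>) \<partial>M)"
    if "q0 \<in> action_bridges M ppi Z A X MZAX (\<lambda>\<omega>. 1 / fW (A \<omega>) (W \<omega>, X \<omega>)) WAX MWAX" "h \<in> H'"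
    for q0 h
    using integral_action_bridge_mult_eq_integral_Top[OF prob sf meas(1-5) _ pi_meas dens_U dens_W _ NC_v]
      NC_iv a0 that H'_L2 unfolding WAX_def MWAX_def ZAX_def MZAX_def by blast
  with outcome_bridges_eq_argmin[OF prob WAX ZAX meas(6) Y_L2 H_L2 Q'_L2 real_H closed_Q']
    action_bridges_eq_argmin[OF prob WAX ZAX[unfolded ZAX_def] Q_L2[unfolded ZAX_def] H'_L2
      real_Q closed_H'[unfolded ZAX_def]]
  show ?thesis unfolding ZAX_def by simp
qed

end
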